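(* Under the standing setup with assumptions (A1)–(A5), for every $\epsilon>0$ and $\delta>0$ there exists $L_{\epsilon,\delta}>0$ such that: if $mF(\tau)>1$, then for all $n\ge0$ with $\mathrm P[W_n\ge L_{\epsilon,\delta}]>0$, $$\mathrm P\Big[\bigcap_{l\ge0}\Big\{\frac{W_{n+l+1}}{W_{n+l}}>mF(\tau)-\delta\Big\}\,\Big|\,W_n\ge L_{\epsilon,\delta}\Big]\ge1-\epsilon;$$ and if $m(1-F(\theta))>1$, then for all $n\ge0$ with $\mathrm P[S_n\ge L_{\epsilon,\delta}]>0$, $$\mathrm P\Big[\bigcap_{l\ge0}\Big\{\frac{S_{n+l+1}}{S_{n+l}}>m(1-F(\theta))-\delta\Big\}\,\Big|\,S_n\ge L_{\epsilon,\delta}\Big]\ge1-\epsilon.$$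
   Context: Standing setup. On a probability space $(\Omega,\mathcal F,\mathrm P)$ there are three mutually independent double arrays $(D_n^k)_{n\ge0,k\ge1}$, $(X_n^k)_{n\ge0,k\ge1}$, $(R_n^k)_{n\ge0,k\ge1}$, each consisting of i.i.d. random variables: $D_n^k\in\{0,1,2,\dots\}$ with law $p_j=\mathrm P[D_n^k=j]$ and mean $m$; $X_n^k\ge0$ real-valued with continuous distribution function $F$ and mean $\mu$; $R_n^k\ge0$ real-valued with mean $r$. Standing assumptions: (A1) $1<m<\infty$, $r<\infty$, $0<\mu<\infty$; (A2) $p_0>0$ and $p_k>0$ for some $k\ge2$; (A3) for the process under consideration started at $1$, every finite positive state is reached with positive probability; (A4) $D_n^k,X_n^k,R_n^k$ have finite variances; (A5) all $D_n^k,X_n^k,R_n^k$ are bounded, and $b$ denotes the supremum of the support of $F$. Write $D_n(k)=\sum_{j=1}^kD_n^j$, $R_n(k)=\sum_{j=1}^kR_n^j$. For $(x_k)_{k=1}^t$ let $x_{1,t}\le\dots\le x_{t,t}$ be its order statistics. $N(0,\varnothing,s)=M(0,\varnothing,s)=0$; for $t\ge1$, $N(t,(x_k)_{k=1}^t,s)=0$ if $x_{1,t}>s$, otherwise $\max\{1\le k\le t:\sum_{j=1}^kx_{j,t}\le s\}$; $M(t,(x_k)_{k=1}^t,s)=0$ if $x_{t,t}>s$, otherwise $\max\{1\le k\le t:\sum_{j=t-k+1}^tx_{j,t}\le s\}$. wf-process: $W_0=1$, $W_{n+1}=N\big(D_n(W_n),(X_n^k)_{k=1}^{D_n(W_n)},R_n(W_n)\big)$;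 sf-process: $S_0=1$, $S_{n+1}=M\big(D_n(S_n),(X_n^k)_{k=1}^{D_n(S_n)},R_n(S_n)\big)$. Ratios $Z_{n+1}/Z_n$ are set to $0$ when $Z_n=0$. If $r\le m\mu$, $\tau$ is a solution of $\int_0^\tau x\,\mathrm dF(x)=r/m$ and $\theta$ a solution of $\int_\theta^bx\,\mathrm dF(x)=r/m$; if $r>m\mu$ one sets by convention $F(\tau):=1$ and $1-F(\theta):=1$. *)

theory Defs
  imports "HOL-Probability.Probability"
begin

definition ordstat :: "nat \<Rightarrow> (nat \<Rightarrow> real) \<Rightarrow> real list" where
  "ordstat t x = sort (map x [1..<Suc t])"

text \<open>N(t,(x_k),s): how many of the smallest values fit into budget s.\<close>
definition Nsel :: "nat \<Rightarrow> (nat \<Rightarrow> real) \<Rightarrow> real \<Rightarrow> nat" where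
  "Nsel t x s = (if t = 0 then 0
     else if ordstat t x ! 0 > s then 0
     else Max {k \<in> {1..t}. sum_list (take k (ordstat t x)) \<le> s})"

text \<open>M(t,(x_k),s): how many of the largest values fit into budget s.\<close>
definition Msel :: "nat \<Rightarrow> (nat \<Rightarrow> real) \<Rightarrow> real \<Rightarrow> nat" where
  "Msel t x s = (if t = 0 then 0
     else if ordstat t x ! (t - 1) > s then 0
     else Max {k \<in> {1..t}. sum_list (drop (t - k) (ordstat t x)) \<le> s})"

definition Dsum :: "(nat \<Rightarrow> nat \<Rightarrow> 'a \<Rightarrow> nat) \<Rightarrow> nat \<Rightarrow> nat \<Rightarrow> 'a \<Rightarrow> nat" where
  "Dsum D n w \<omega> = (\<Sum>j=1..w. D n j \<omega>)"

definition Rsum :: "(nat \<Rightarrow> nat \<Rightarrow> 'a \<Rightarrow> real) \<Rightarrow> nat \<Rightarrow> nat \<Rightarrow> 'a \<Rightarrow> real" where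
  "Rsum R n w \<omega> = (\<Sum>j=1..w. R n j \<omega>)"

primrec wf_proc :: "(nat \<Rightarrow> nat \<Rightarrow> 'a \<Rightarrow> nat) \<Rightarrow> (nat \<Rightarrow> nat \<Rightarrow> 'a \<Rightarrow> real) \<Rightarrow>
    (nat \<Rightarrow> nat \<Rightarrow> 'a \<Rightarrow> real) \<Rightarrow> nat \<Rightarrow> 'a \<Rightarrow> nat" where
  "wf_proc D X R 0 \<omega> = 1"
| "wf_proc D X R (Suc n) \<omega> =
     Nsel (Dsum D n (wf_proc D X R n \<omega>) \<omega>) (\<lambda>k. X n k \<omega>) (Rsum R n (wf_proc D X R n \<omega>) \<omega>)"

primrec sf_proc :: "(nat \<Rightarrow> nat \<Rightarrow> 'a \<Rightarrow> nat) \<Rightarrow> (nat \<Rightarrow> nat \<Rightarrow> 'a \<Rightarrow> real) \<Rightarrow>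
    (nat \<Rightarrow> nat \<Rightarrow> 'a \<Rightarrow> real) \<Rightarrow> nat \<Rightarrow> 'a \<Rightarrow> nat" where
  "sf_proc D X R 0 \<omega> = 1"
| "sf_proc D X R (Suc n) \<omega> =
     Msel (Dsum D n (sf_proc D X R n \<omega>) \<omega>) (\<lambda>k. X n k \<omega>) (Rsum R n (sf_proc D X R n \<omega>) \<omega>)"

text \<open>Ratio Z_{n+1}/Z_n, set to 0 when Z_n = 0.\<close>
definition ratio :: "nat \<Rightarrow> nat \<Rightarrow> real" where
  "ratio a b = (if b = 0 then 0 else real a / real b)"

text \<open>All D, X, R (indices n \<ge> 0, k \<ge> 1) mutually independent; tag 0 = D, 1 = X, 2 = R.\<close>
definition all_vars :: "(nat \<Rightarrow> nat \<Rightarrow> 'a \<Rightarrow> nat) \<Rightarrow> (nat \<Rightarrow> nat \<Rightarrow> 'a \<Rightarrow> real) \<Rightarrow>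
    (nat \<Rightarrow> nat \<Rightarrow> 'a \<Rightarrow> real) \<Rightarrow> nat \<times> nat \<times> nat \<Rightarrow> 'a \<Rightarrow> real" where
  "all_vars D X R = (\<lambda>(i, n, k) \<omega>. if i = 0 then real (D n k \<omega>) else if i = 1 then X n k \<omega> else R n k \<omega>)"

definition var_index :: "(nat \<times> nat \<times> nat) set" where
  "var_index = {(i, n, k). i < 3 \<and> 1 \<le> k}"

definition standing_setup ::
  "'a measure \<Rightarrow> (nat \<Rightarrow> nat \<Rightarrow> 'a \<Rightarrow> nat) \<Rightarrow> (nat \<Rightarrow> nat \<Rightarrow> 'a \<Rightarrow> real) \<Rightarrow>
   (nat \<Rightarrow> nat \<Rightarrow> 'a \<Rightarrow> real) \<Rightarrow> bool" where
  "standing_setup M D X R \<longleftrightarrow>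
     prob_space M \<and>
     (\<forall>n k. D n k \<in> M \<rightarrow>\<^sub>M count_space UNIV) \<and>
     (\<forall>n k. X n k \<in> borel_measurable M) \<and>
     (\<forall>n k. R n k \<in> borel_measurable M) \<and>
     prob_space.indep_vars M (\<lambda>_. borel) (all_vars D X R) var_index \<and>
     (\<forall>n k. 1 \<le> k \<longrightarrow> distr M (count_space UNIV) (D n k) = distr M (count_space UNIV) (D 0 1)) \<and>
     (\<forall>n k. 1 \<le> k \<longrightarrow> distr M borel (X n k) = distr M borel (X 0 1)) \<and>
     (\<forall>n k. 1 \<le> k \<longrightarrow> distr M borel (R n k) = distr M borel (R 0 1)) \<and>
     (\<forall>n k. \<forall>\<omega>\<in>space M. 0 \<le> X n k \<omega> \<and> 0 \<le> R n k \<omega>)"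

definition pD :: "'a measure \<Rightarrow> (nat \<Rightarrow> nat \<Rightarrow> 'a \<Rightarrow> nat) \<Rightarrow> nat \<Rightarrow> real" where
  "pD M D j = measure M {\<omega> \<in> space M. D 0 1 \<omega> = j}"

definition mD :: "'a measure \<Rightarrow> (nat \<Rightarrow> nat \<Rightarrow> 'a \<Rightarrow> nat) \<Rightarrow> real" where
  "mD M D = (\<integral>\<omega>. real (D 0 1 \<omega>) \<partial>M)"

definition muX :: "'a measure \<Rightarrow> (nat \<Rightarrow> nat \<Rightarrow> 'a \<Rightarrow> real) \<Rightarrow> real" where
  "muX M X = (\<integral>\<omega>. X 0 1 \<omega> \<partial>M)"

definition rR :: "'a measure \<Rightarrow> (nat \<Rightarrow> nat \<Rightarrow> 'a \<Rightarrow> real) \<Rightarrow> real" where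
  "rR M R = (\<integral>\<omega>. R 0 1 \<omega> \<partial>M)"

definition cdfX :: "'a measure \<Rightarrow> (nat \<Rightarrow> nat \<Rightarrow> 'a \<Rightarrow> real) \<Rightarrow> real \<Rightarrow> real" where
  "cdfX M X x = measure M {\<omega> \<in> space M. X 0 1 \<omega> \<le> x}"

definition lawX :: "'a measure \<Rightarrow> (nat \<Rightarrow> nat \<Rightarrow> 'a \<Rightarrow> real) \<Rightarrow> real measure" where
  "lawX M X = distr M borel (X 0 1)"

definition supp_sup :: "'a measure \<Rightarrow> (nat \<Rightarrow> nat \<Rightarrow> 'a \<Rightarrow> real) \<Rightarrow> real" where
  "supp_sup M X = Inf {x. cdfX M X x = 1}"

definition assumptions_A ::
  "'a measure \<Rightarrow> (nat \<Rightarrow> nat \<Rightarrow> 'a \<Rightarrow> nat) \<Rightarrow> (nat \<Rightarrow> nat \<Rightarrow> 'a \<Rightarrow> real) \<Rightarrow>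
   (nat \<Rightarrow> nat \<Rightarrow> 'a \<Rightarrow> real) \<Rightarrow> bool" where
  "assumptions_A M D X R \<longleftrightarrow>
     (\<forall>x. isCont (cdfX M X) x) \<and>
     \<comment> \<open>(A1): means exist (finite) and 1 < m, 0 < mu\<close>
     integrable M (\<lambda>\<omega>. real (D 0 1 \<omega>)) \<and> integrable M (X 0 1) \<and> integrable M (R 0 1) \<and>
     1 < mD M D \<and> 0 < muX M X \<and>
     \<comment> \<open>(A2)\<close>
     pD M D 0 > 0 \<and> (\<exists>k\<ge>2. pD M D k > 0) \<and>
     \<comment> \<open>(A4): finite variances\<close>
     integrable M (\<lambda>\<omega>. (real (D 0 1 \<omega>))\<^sup>2) \<and> integrable M (\<lambda>\<omega>. (X 0 1 \<omega>)\<^sup>2) \<and>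
     integrable M (\<lambda>\<omega>. (R 0 1 \<omega>)\<^sup>2) \<and>
     \<comment> \<open>(A5): boundedness\<close>
     (\<exists>C. \<forall>n k. AE \<omega> in M. real (D n k \<omega>) \<le> C \<and> \<bar>X n k \<omega>\<bar> \<le> C \<and> \<bar>R n k \<omega>\<bar> \<le> C)"

definition reaches_all :: "'a measure \<Rightarrow> (nat \<Rightarrow> 'a \<Rightarrow> nat) \<Rightarrow> bool" where
  "reaches_all M Z \<longleftrightarrow> (\<forall>j\<ge>1. \<exists>n. measure M {\<omega> \<in> space M. Z n \<omega> = j} > 0)"

end

theory Submission
  imports Defs
begin

text \<open>
  Fix a growth factor \<open>g\<close> slightly below the target \<open>m F(\<tau>)\<close> (resp. \<open>m (1 - F(\<theta>))\<close>).
  \<^item> A size threshold \<open>u\<close> (resp. \<open>v\<close>) is chosen such that the offspring of size at most \<open>u\<close>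
    (resp. above \<open>v\<close>) number more than \<open>g\<close> per parent on average, while their mean total
    size stays below the mean resource \<open>r\<close> (\<open>wf_threshold\<close>, \<open>sf_threshold\<close>).  The selection
    functions \<open>N\<close> and \<open>M\<close> keep all such offspring whenever they fit the budget
    (\<open>Nsel_lb\<close>, \<open>Msel_lb\<close>).
  \<^item> Hoeffding's inequality for the offspring numbers, the sizes and the resources of one
    generation then shows that a generation of size \<open>w\<close> grows by at most the factor \<open>g\<close> only
    with probability \<open>O(1/w)\<close> (\<open>step_bound\<close>).
  \<^item> If a trajectory starting above \<open>L\<close> ever grows by at most \<open>g\<close>, the first such generation
    \<open>n + l\<close> has size at least \<open>L g\<^sup>l\<close>; by independence of the past and the current generation
    these events have probabilities bounded by a geometric series of sum
    \<open>O(P[Z\<^sub>n \<ge> L] / L)\<close> (\<open>conditional_growth_from_step_bound\<close>).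
\<close>

section \<open>The selection functions\<close>

lemma ordstat_basic:
  "length (ordstat t x) = t" "set (ordstat t x) = x ` {1..t}" "sorted (ordstat t x)"
  by (auto simp: ordstat_def atLeastLessThanSuc_atLeastAtMost)

lemma sort_partition:
  fixes xs :: "real list"
  assumes "\<forall>a\<in>set xs. \<forall>b\<in>set xs. P a \<longrightarrow> \<not> P b \<longrightarrow> a \<le> b"
  shows "sort xs = sort (filter P xs) @ sort (filter (\<lambda>a. \<not> P a) xs)"
proof (rule properties_for_sort)
  show "mset (sort (filter P xs) @ sort (filter (\<lambda>a. \<not> P a) xs)) = mset xs"
    by (simp add: multiset_partition[symmetric])
  show "sorted (sort (filter P xs) @ sort (filter (\<lambda>a. \<not> P a) xs))"
    using assms by (auto simp: sorted_append)
qed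

lemma filter_sample:
  "sum_list (filter P (map x [1..<Suc t])) = (\<Sum>j\<in>{j\<in>{1..t}. P (x j)}. (x j::real))"
  "length (filter P (map x [1..<Suc t])) = card {j\<in>{1..t}. P (x j)}"
proof -
  have d: "distinct (filter (P \<circ> x) [1..<Suc t])" by simp
  have s: "set (filter (P \<circ> x) [1..<Suc t]) = {j\<in>{1..t}. P (x j)}" by auto
  show "sum_list (filter P (map x [1..<Suc t])) = (\<Sum>j\<in>{j\<in>{1..t}. P (x j)}. (x j::real))"
    by (simp only: filter_map sum_list_distinct_conv_sum_set[OF d] s)
  show "length (filter P (map x [1..<Suc t])) = card {j\<in>{1..t}. P (x j)}"
    by (metis d distinct_card filter_map length_map s)
qed

text \<open>In a sorted list, the \<open>i\<close>-th entry is at most \<open>c\<close> iff more than \<open>i\<close>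
  entries are at most \<open>c\<close>; for the order statistics this turns a threshold event for
  \<open>x\<^sub>i\<^sub>,\<^sub>t\<close> into a counting event.\<close>

lemma length_filter_sort: "length (filter P (sort xs)) = length (filter P xs)"
  by (metis mset_filter mset_sort size_mset)

lemma sorted_nth_le:
  fixes ys :: "real list"
  assumes "sorted ys" "i < length ys"
  shows "ys ! i \<le> c \<longleftrightarrow> i < length (filter (\<lambda>a. a \<le> c) ys)"
proof -
  have e: "ys = sort (filter (\<lambda>a. a \<le> c) ys) @ sort (filter (\<lambda>a. \<not> a \<le> c) ys)"
    using sort_partition[of ys "\<lambda>a. a \<le> c"] assms(1) by (simp add: sorted_sort_id)
  let ?A = "sort (filter (\<lambda>a. a \<le> c) ys)" and ?B = "sort (filter (\<lambda>a. \<not> a \<le> c) ys)"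
  have "ys ! i = (?A @ ?B) ! i" using e by simp
  also have "\<dots> = (if i < length ?A then ?A ! i else ?B ! (i - length ?A))" by (rule nth_append)
  finally have yi: "ys ! i = (if i < length ?A then ?A ! i else ?B ! (i - length ?A))" .
  have lens: "length ys = length ?A + length ?B" using arg_cong[OF e, of length] by simp
  show ?thesis
  proof (cases "i < length ?A")
    case True
    have "?A ! i \<in> set ?A" using True by (intro nth_mem) simp
    then have "ys ! i \<in> set ?A" using yi True by simp
    then show ?thesis using True by auto
  next
    case False
    have "?B ! (i - length ?A) \<in> set ?B" using False assms(2) lens by (intro nth_mem) simp
    then have "ys ! i \<in> set ?B" using yi False by simp
    then show ?thesis using False by auto
  qed
qed

lemma ordstat_nth_le:
  assumes "i < t"
  shows "ordstat t x ! i \<le> c \<longleftrightarrow> i < card {j\<in>{1..t}. x j \<le> c}"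
proof -
  have 1: "ordstat t x ! i \<le> c \<longleftrightarrow> i < length (filter (\<lambda>a. a \<le> c) (ordstat t x))"
    using sorted_nth_le[OF ordstat_basic(3)] assms ordstat_basic(1) by metis
  have 2: "length (filter (\<lambda>a. a \<le> c) (ordstat t x)) = card {j\<in>{1..t}. x j \<le> c}"
    unfolding ordstat_def length_filter_sort filter_sample ..
  show ?thesis unfolding 1 2 ..
qed

lemma sum_list_take_mono:
  fixes ys :: "real list"
  assumes "\<forall>a\<in>set ys. 0 \<le> a" "k \<le> k'"
  shows "sum_list (take k ys) \<le> sum_list (take k' ys)"
proof -
  have "take k' ys = take k ys @ take (k' - k) (drop k ys)"
    using assms(2) by (metis le_add_diff_inverse take_add)
  moreover have "0 \<le> sum_list (take (k' - k) (drop k ys))"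
    using assms(1) by (intro sum_list_nonneg) (meson in_set_dropD in_set_takeD)
  ultimately show ?thesis by simp
qed

lemma sum_list_drop_mono:
  fixes ys :: "real list"
  assumes "\<forall>a\<in>set ys. 0 \<le> a" "k \<le> k'"
  shows "sum_list (drop k' ys) \<le> sum_list (drop k ys)"
proof -
  have "drop k ys = take (k' - k) (drop k ys) @ drop k' ys"
    using assms(2) by (metis append_take_drop_id drop_drop le_add_diff_inverse2)
  moreover have "0 \<le> sum_list (take (k' - k) (drop k ys))"
    using assms(1) by (intro sum_list_nonneg) (meson in_set_dropD in_set_takeD)
  ultimately show ?thesis by (metis le_add_same_cancel2 sum_list_append)
qed

lemma card_downclosed:
  assumes "finite S" "S \<noteq> {}" "\<And>k k'. k \<in> S \<Longrightarrow> 1 \<le> k' \<Longrightarrow> k' \<le> k \<Longrightarrow> k' \<in> S"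
    "\<And>k. k \<in> S \<Longrightarrow> (1::nat) \<le> k"
  shows "card S = Max S"
proof -
  have "S = {1..Max S}"
  proof
    show "S \<subseteq> {1..Max S}"
    proof
      fix k assume "k \<in> S"
      then show "k \<in> {1..Max S}" using assms(4)[of k] Max_ge[OF assms(1), of k] by simp
    qed
    show "{1..Max S} \<subseteq> S"
    proof
      fix k assume "k \<in> {1..Max S}"
      then show "k \<in> S" using assms(3)[OF Max_in[OF assms(1,2)], of k] by simp
    qed
  qed
  then show ?thesis by (metis card_atLeastAtMost diff_Suc_1)
qed

text \<open>For nonnegative samples the admissible counts form an initial segment, so \<open>N\<close> and
  \<open>M\<close> are simply the numbers of admissible counts; this description is used both for
  measurability and for the lower bounds below.\<close>

lemma Nsel_card:
  assumes nn: "\<forall>j\<in>{1..t}. 0 \<le> x j"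
  shows "Nsel t x s = card {k\<in>{1..t}. sum_list (take k (ordstat t x)) \<le> s}"
proof -
  let ?ys = "ordstat t x"
  let ?S = "{k\<in>{1..t}. sum_list (take k ?ys) \<le> s}"
  have ysnn: "\<forall>a\<in>set ?ys. 0 \<le> a" using nn ordstat_basic(2) by auto
  have dc: "k' \<in> ?S" if "k \<in> ?S" "1 \<le> k'" "k' \<le> k" for k k'
    using that sum_list_take_mono[OF ysnn, of k' k] by auto
  show ?thesis
  proof (cases "t = 0")
    case True then show ?thesis by (simp add: Nsel_def)
  next
    case t: False
    have "?ys \<noteq> []" using t ordstat_basic(1)[of t x] by auto
    then have t1: "take 1 ?ys = [?ys ! 0]" by (cases ?ys) auto
    show ?thesis
    proof (cases "s < ?ys ! 0")
      case True
      have "?S = {}"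
      proof (rule ccontr)
        assume "?S \<noteq> {}"
        then obtain k where "k \<in> ?S" by blast
        then have "1 \<in> ?S" using dc[of k 1] by auto
        then show False using True t1 by auto
      qed
      then show ?thesis using True t by (simp add: Nsel_def)
    next
      case False
      then have "1 \<in> ?S" using t t1 by auto
      then have "card ?S = Max ?S" by (intro card_downclosed) (use dc in auto)
      then show ?thesis using False t by (simp add: Nsel_def)
    qed
  qed
qed

lemma Msel_card:
  assumes nn: "\<forall>j\<in>{1..t}. 0 \<le> x j"
  shows "Msel t x s = card {k\<in>{1..t}. sum_list (drop (t - k) (ordstat t x)) \<le> s}"
proof -
  let ?ys = "ordstat t x"
  let ?S = "{k\<in>{1..t}. sum_list (drop (t - k) ?ys) \<le> s}"
  have ysnn: "\<forall>a\<in>set ?ys. 0 \<le> a" using nn ordstat_basic(2) by auto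
  have dc: "k' \<in> ?S" if "k \<in> ?S" "1 \<le> k'" "k' \<le> k" for k k'
  proof -
    have "sum_list (drop (t - k') ?ys) \<le> sum_list (drop (t - k) ?ys)"
      using that by (intro sum_list_drop_mono[OF ysnn]) auto
    then show ?thesis using that by auto
  qed
  show ?thesis
  proof (cases "t = 0")
    case True then show ?thesis by (simp add: Msel_def)
  next
    case t: False
    have ne: "?ys \<noteq> []" using t ordstat_basic(1)[of t x] by auto
    have "drop (length ?ys - 1) ?ys = [?ys ! (length ?ys - 1)]"
      using ne by (cases ?ys rule: rev_cases) (auto simp: nth_append)
    then have t1: "drop (t - 1) ?ys = [?ys ! (t - 1)]" by (simp add: ordstat_basic(1))
    show ?thesis
    proof (cases "s < ?ys ! (t - 1)")
      case True
      have "?S = {}"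
      proof (rule ccontr)
        assume "?S \<noteq> {}"
        then obtain k where "k \<in> ?S" by blast
        then have "1 \<in> ?S" using dc[of k 1] by auto
        then show False using True t1 by auto
      qed
      then show ?thesis using True t by (simp add: Msel_def)
    next
      case False
      then have "1 \<in> ?S" using t t1 by auto
      then have "card ?S = Max ?S" by (intro card_downclosed) (use dc in auto)
      then show ?thesis using False t by (simp add: Msel_def)
    qed
  qed
qed

lemma Nsel_lb:
  assumes nn: "\<forall>j\<in>{1..t}. 0 \<le> x j"
    and fits: "(\<Sum>j\<in>{j\<in>{1..t}. x j \<le> u}. x j) \<le> s"
  shows "card {j\<in>{1..t}. x j \<le> u} \<le> Nsel t x s"
proof -
  let ?xs = "map x [1..<Suc t]"
  let ?c = "card {j\<in>{1..t}. x j \<le> u}"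
  let ?ys = "ordstat t x"
  have sp: "?ys = sort (filter (\<lambda>a. a \<le> u) ?xs) @ sort (filter (\<lambda>a. \<not> a \<le> u) ?xs)"
    unfolding ordstat_def by (rule sort_partition) auto
  have lA: "length (sort (filter (\<lambda>a. a \<le> u) ?xs)) = ?c"
    using filter_sample(2) by simp
  have "take ?c ?ys = take (length (sort (filter (\<lambda>a. a \<le> u) ?xs))) (sort (filter (\<lambda>a. a \<le> u) ?xs) @ sort (filter (\<lambda>a. \<not> a \<le> u) ?xs))"
    using sp lA by simp
  then have "take ?c ?ys = sort (filter (\<lambda>a. a \<le> u) ?xs)" by simp
  then have pc: "sum_list (take ?c ?ys) = (\<Sum>j\<in>{j\<in>{1..t}. x j \<le> u}. x j)"
    using filter_sample(1)[of "\<lambda>a. a \<le> u" x t] by (metis mset_sort sum_mset_sum_list)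
  have ysnn: "\<forall>a\<in>set ?ys. 0 \<le> a" using nn ordstat_basic(2) by auto
  have ct: "?c \<le> t" by (rule order_trans[OF card_mono[of "{1..t}"]]) auto
  have "{1..?c} \<subseteq> {k\<in>{1..t}. sum_list (take k ?ys) \<le> s}"
  proof
    fix k assume k: "k \<in> {1..?c}"
    have "sum_list (take k ?ys) \<le> sum_list (take ?c ?ys)"
      using k by (intro sum_list_take_mono[OF ysnn]) auto
    then show "k \<in> {k\<in>{1..t}. sum_list (take k ?ys) \<le> s}" using k ct pc fits by auto
  qed
  then have "card {1..?c} \<le> card {k\<in>{1..t}. sum_list (take k ?ys) \<le> s}"
    by (intro card_mono) auto
  then show ?thesis using Nsel_card[OF nn] by simp
qed

lemma Msel_lb:
  assumes nn: "\<forall>j\<in>{1..t}. 0 \<le> x j"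
    and fits: "(\<Sum>j\<in>{j\<in>{1..t}. v < x j}. x j) \<le> s"
  shows "card {j\<in>{1..t}. v < x j} \<le> Msel t x s"
proof -
  let ?xs = "map x [1..<Suc t]"
  let ?c = "card {j\<in>{1..t}. v < x j}"
  let ?ys = "ordstat t x"
  have sp: "?ys = sort (filter (\<lambda>a. a \<le> v) ?xs) @ sort (filter (\<lambda>a. \<not> a \<le> v) ?xs)"
    unfolding ordstat_def by (rule sort_partition) auto
  have lB: "length (sort (filter (\<lambda>a. \<not> a \<le> v) ?xs)) = ?c"
    using filter_sample(2)[of "\<lambda>a. \<not> a \<le> v" x t] by (simp add: not_le)
  have "length ?ys = t" by (rule ordstat_basic(1))
  then have lA: "length (sort (filter (\<lambda>a. a \<le> v) ?xs)) = t - ?c"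
    using arg_cong[OF sp, of length] lB by simp
  have "drop (t - ?c) ?ys = drop (length (sort (filter (\<lambda>a. a \<le> v) ?xs))) (sort (filter (\<lambda>a. a \<le> v) ?xs) @ sort (filter (\<lambda>a. \<not> a \<le> v) ?xs))"
    using sp lA by simp
  then have "drop (t - ?c) ?ys = sort (filter (\<lambda>a. \<not> a \<le> v) ?xs)" by simp
  moreover have "{j\<in>{1..t}. \<not> x j \<le> v} = {j\<in>{1..t}. v < x j}" by auto
  ultimately have pc: "sum_list (drop (t - ?c) ?ys) = (\<Sum>j\<in>{j\<in>{1..t}. v < x j}. x j)"
    using filter_sample(1)[of "\<lambda>a. \<not> a \<le> v" x t] by (metis mset_sort sum_mset_sum_list)
  have ysnn: "\<forall>a\<in>set ?ys. 0 \<le> a" using nn ordstat_basic(2) by auto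
  have ct: "?c \<le> t" by (rule order_trans[OF card_mono[of "{1..t}"]]) auto
  have "{1..?c} \<subseteq> {k\<in>{1..t}. sum_list (drop (t - k) ?ys) \<le> s}"
  proof
    fix k assume k: "k \<in> {1..?c}"
    have "sum_list (drop (t - k) ?ys) \<le> sum_list (drop (t - ?c) ?ys)"
      using k by (intro sum_list_drop_mono[OF ysnn]) auto
    then show "k \<in> {k\<in>{1..t}. sum_list (drop (t - k) ?ys) \<le> s}" using k ct pc fits by auto
  qed
  then have "card {1..?c} \<le> card {k\<in>{1..t}. sum_list (drop (t - k) ?ys) \<le> s}"
    by (intro card_mono) auto
  then show ?thesis using Msel_card[OF nn] by simp
qed

section \<open>Measurability\<close>

lemma measurable_natI:
  fixes f :: "'a \<Rightarrow> nat"
  assumes "(\<lambda>\<omega>. real (f \<omega>)) \<in> borel_measurable N"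
  shows "f \<in> N \<rightarrow>\<^sub>M count_space UNIV"
proof (subst measurable_count_space_eq2_countable, intro conjI ballI)
  show "f \<in> space N \<rightarrow> UNIV" by simp
  fix a :: nat
  have "{\<omega>\<in>space N. real (f \<omega>) = real a} \<in> sets N"
    using borel_measurable_eq[OF assms borel_measurable_const] .
  moreover have "f -` {a} \<inter> space N = {\<omega>\<in>space N. real (f \<omega>) = real a}" by auto
  ultimately show "f -` {a} \<inter> space N \<in> sets N" by simp
qed

lemma measurable_real_of_nat:
  assumes "f \<in> N \<rightarrow>\<^sub>M count_space UNIV"
  shows "(\<lambda>\<omega>. real (f \<omega> :: nat)) \<in> borel_measurable N"
  using measurable_compose[OF assms, of real borel] by (simp add: measurable_count_space_eq1)

lemma measurable_card:
  assumes "finite A" "\<And>k. k \<in> A \<Longrightarrow> {\<omega>\<in>space N. P k \<omega>} \<in> sets N"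
  shows "(\<lambda>\<omega>. real (card {k\<in>A. P k \<omega>})) \<in> borel_measurable N"
proof -
  have eq: "real (card {k\<in>A. P k \<omega>}) = (\<Sum>k\<in>A. if P k \<omega> then 1 else 0)" for \<omega>
    using assms(1) by (simp add: sum.If_cases Int_def)
  have "(\<lambda>\<omega>. \<Sum>k\<in>A. if P k \<omega> then 1 else (0::real)) \<in> borel_measurable N"
    using assms(2) by (intro borel_measurable_sum measurable_If borel_measurable_const)
  then show ?thesis by (simp add: eq)
qed

lemma ordstat_measurable:
  assumes xm: "\<And>j. j \<in> {1..t} \<Longrightarrow> x j \<in> borel_measurable N" and i: "i < t"
  shows "(\<lambda>\<omega>. ordstat t (\<lambda>j. x j \<omega>) ! i) \<in> borel_measurable N"
proof (subst borel_measurable_iff_le, intro allI)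
  fix a
  have "(\<lambda>\<omega>. real (card {j\<in>{1..t}. x j \<omega> \<le> a})) \<in> borel_measurable N"
    using xm by (intro measurable_card) (auto intro: borel_measurable_le[OF _ borel_measurable_const])
  then have m: "{\<omega>\<in>space N. real i < real (card {j\<in>{1..t}. x j \<omega> \<le> a})} \<in> sets N"
    by (rule borel_measurable_less[OF borel_measurable_const])
  have e: "{\<omega>\<in>space N. ordstat t (\<lambda>j. x j \<omega>) ! i \<le> a} =
      {\<omega>\<in>space N. real i < real (card {j\<in>{1..t}. x j \<omega> \<le> a})}"
    by (intro Collect_cong conj_cong refl) (simp only: ordstat_nth_le[OF i] of_nat_less_iff)
  show "{\<omega>\<in>space N. ordstat t (\<lambda>j. x j \<omega>) ! i \<le> a} \<in> sets N"
    unfolding e by (rule m)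
qed

lemma prefix_sum_measurable:
  assumes xm: "\<And>j. j \<in> {1..t} \<Longrightarrow> x j \<in> borel_measurable N" and k: "k \<le> t"
  shows "(\<lambda>\<omega>. sum_list (take k (ordstat t (\<lambda>j. x j \<omega>)))) \<in> borel_measurable N"
proof -
  have "(\<lambda>\<omega>. \<Sum>i<k. ordstat t (\<lambda>j. x j \<omega>) ! i) \<in> borel_measurable N"
    using k by (intro borel_measurable_sum ordstat_measurable[OF xm]) auto
  moreover have "sum_list (take k (ordstat t (\<lambda>j. x j \<omega>))) = (\<Sum>i<k. ordstat t (\<lambda>j. x j \<omega>) ! i)" for \<omega>
    using k by (simp add: sum_list_sum_nth atLeast0LessThan min_absorb1 ordstat_basic(1))
  ultimately show ?thesis by simp
qed

lemma Nsel_measurable: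
  assumes xm: "\<And>j. j \<in> {1..t} \<Longrightarrow> x j \<in> borel_measurable N" and sm: "s \<in> borel_measurable N"
    and nn: "\<And>\<omega> j. \<omega> \<in> space N \<Longrightarrow> j \<in> {1..t} \<Longrightarrow> 0 \<le> x j \<omega>"
  shows "(\<lambda>\<omega>. Nsel t (\<lambda>j. x j \<omega>) (s \<omega>)) \<in> N \<rightarrow>\<^sub>M count_space UNIV"
proof (rule measurable_natI)
  have "(\<lambda>\<omega>. real (card {k\<in>{1..t}. sum_list (take k (ordstat t (\<lambda>j. x j \<omega>))) \<le> s \<omega>})) \<in> borel_measurable N"
  proof (rule measurable_card)
    fix k assume "k \<in> {1..t}"
    then have "(\<lambda>\<omega>. sum_list (take k (ordstat t (\<lambda>j. x j \<omega>)))) \<in> borel_measurable N"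
      by (intro prefix_sum_measurable[OF xm]) auto
    then show "{\<omega>\<in>space N. sum_list (take k (ordstat t (\<lambda>j. x j \<omega>))) \<le> s \<omega>} \<in> sets N"
      using borel_measurable_le[OF _ sm] by blast
  qed simp
  then show "(\<lambda>\<omega>. real (Nsel t (\<lambda>j. x j \<omega>) (s \<omega>))) \<in> borel_measurable N"
    by (rule measurable_cong[THEN iffD1, rotated]) (simp add: Nsel_card nn)
qed

text \<open>Suffix sums are total sums minus prefix sums, hence measurable as well.\<close>

lemma Msel_measurable:
  assumes xm: "\<And>j. j \<in> {1..t} \<Longrightarrow> x j \<in> borel_measurable N" and sm: "s \<in> borel_measurable N"
    and nn: "\<And>\<omega> j. \<omega> \<in> space N \<Longrightarrow> j \<in> {1..t} \<Longrightarrow> 0 \<le> x j \<omega>"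
  shows "(\<lambda>\<omega>. Msel t (\<lambda>j. x j \<omega>) (s \<omega>)) \<in> N \<rightarrow>\<^sub>M count_space UNIV"
proof (rule measurable_natI)
  have dr: "sum_list (drop a ys) = sum_list ys - sum_list (take a ys)" for a and ys :: "real list"
    by (metis add_diff_cancel_left' append_take_drop_id sum_list_append)
  have "(\<lambda>\<omega>. real (card {k\<in>{1..t}. sum_list (drop (t - k) (ordstat t (\<lambda>j. x j \<omega>))) \<le> s \<omega>})) \<in> borel_measurable N"
  proof (rule measurable_card)
    fix k assume "k \<in> {1..t}"
    then have "(\<lambda>\<omega>. sum_list (take t (ordstat t (\<lambda>j. x j \<omega>))) - sum_list (take (t - k) (ordstat t (\<lambda>j. x j \<omega>)))) \<in> borel_measurable N"
      by (intro borel_measurable_diff prefix_sum_measurable[OF xm]) auto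
    moreover have "sum_list (take t (ordstat t (\<lambda>j. x j \<omega>))) = sum_list (ordstat t (\<lambda>j. x j \<omega>))" for \<omega>
      by (simp add: ordstat_basic(1))
    ultimately have "(\<lambda>\<omega>. sum_list (drop (t - k) (ordstat t (\<lambda>j. x j \<omega>)))) \<in> borel_measurable N"
      by (simp add: dr)
    then show "{\<omega>\<in>space N. sum_list (drop (t - k) (ordstat t (\<lambda>j. x j \<omega>))) \<le> s \<omega>} \<in> sets N"
      using borel_measurable_le[OF _ sm] by blast
  qed simp
  then show "(\<lambda>\<omega>. real (Msel t (\<lambda>j. x j \<omega>) (s \<omega>))) \<in> borel_measurable N"
    by (rule measurable_cong[THEN iffD1, rotated]) (simp add: Msel_card nn)
qed

primrec sel_proc :: "(nat \<Rightarrow> (nat \<Rightarrow> real) \<Rightarrow> real \<Rightarrow> nat) \<Rightarrow> (nat \<Rightarrow> nat \<Rightarrow> 'a \<Rightarrow> nat) \<Rightarrow>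
    (nat \<Rightarrow> nat \<Rightarrow> 'a \<Rightarrow> real) \<Rightarrow> (nat \<Rightarrow> nat \<Rightarrow> 'a \<Rightarrow> real) \<Rightarrow> nat \<Rightarrow> 'a \<Rightarrow> nat" where
  "sel_proc sel D X R 0 \<omega> = 1"
| "sel_proc sel D X R (Suc n) \<omega> =
     sel (Dsum D n (sel_proc sel D X R n \<omega>) \<omega>) (\<lambda>k. X n k \<omega>) (Rsum R n (sel_proc sel D X R n \<omega>) \<omega>)"

lemma wf_proc_eq: "wf_proc D X R = sel_proc Nsel D X R"
proof (intro ext)
  fix n \<omega> show "wf_proc D X R n \<omega> = sel_proc Nsel D X R n \<omega>" by (induction n) simp_all
qed

lemma sf_proc_eq: "sf_proc D X R = sel_proc Msel D X R"
proof (intro ext)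
  fix n \<omega> show "sf_proc D X R n \<omega> = sel_proc Msel D X R n \<omega>" by (induction n) simp_all
qed

lemma step_measurable:
  assumes sel: "sel = Nsel \<or> sel = Msel"
    and Dm: "\<And>j. 1 \<le> j \<Longrightarrow> D k j \<in> N \<rightarrow>\<^sub>M count_space UNIV"
    and Xm: "\<And>j. 1 \<le> j \<Longrightarrow> X k j \<in> borel_measurable N"
    and Rm: "\<And>j. 1 \<le> j \<Longrightarrow> R k j \<in> borel_measurable N"
    and nn: "\<And>\<omega> j. \<omega> \<in> space N \<Longrightarrow> 0 \<le> X k j \<omega>"
  shows "(\<lambda>\<omega>. sel (Dsum D k w \<omega>) (\<lambda>j. X k j \<omega>) (Rsum R k w \<omega>)) \<in> N \<rightarrow>\<^sub>M count_space UNIV"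
proof (rule measurable_compose_countable[where f = "\<lambda>t \<omega>. sel t (\<lambda>j. X k j \<omega>) (Rsum R k w \<omega>)"])
  have "(\<lambda>\<omega>. \<Sum>j=1..w. real (D k j \<omega>)) \<in> borel_measurable N"
    using Dm by (intro borel_measurable_sum measurable_real_of_nat) auto
  then show "Dsum D k w \<in> N \<rightarrow>\<^sub>M count_space UNIV"
    by (intro measurable_natI) (simp add: Dsum_def)
  have Rs: "Rsum R k w \<in> borel_measurable N"
    unfolding Rsum_def using Rm by (intro borel_measurable_sum) auto
  fix t
  show "(\<lambda>\<omega>. sel t (\<lambda>j. X k j \<omega>) (Rsum R k w \<omega>)) \<in> N \<rightarrow>\<^sub>M count_space UNIV"
    using sel Nsel_measurable[OF _ Rs] Msel_measurable[OF _ Rs] Xm nn by auto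
qed

lemma sel_proc_measurable:
  assumes sel: "sel = Nsel \<or> sel = Msel"
    and Dm: "\<And>n j. n < K \<Longrightarrow> 1 \<le> j \<Longrightarrow> D n j \<in> N \<rightarrow>\<^sub>M count_space UNIV"
    and Xm: "\<And>n j. n < K \<Longrightarrow> 1 \<le> j \<Longrightarrow> X n j \<in> borel_measurable N"
    and Rm: "\<And>n j. n < K \<Longrightarrow> 1 \<le> j \<Longrightarrow> R n j \<in> borel_measurable N"
    and nn: "\<And>\<omega> n j. \<omega> \<in> space N \<Longrightarrow> 0 \<le> X n j \<omega>"
  shows "k \<le> K \<Longrightarrow> sel_proc sel D X R k \<in> N \<rightarrow>\<^sub>M count_space UNIV"
proof (induction k)
  case 0 then show ?case by simp
next
  case (Suc k)
  then have kK: "k < K" by simp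
  have "(\<lambda>\<omega>. (\<lambda>w \<omega>. sel (Dsum D k w \<omega>) (\<lambda>j. X k j \<omega>) (Rsum R k w \<omega>)) (sel_proc sel D X R k \<omega>) \<omega>)
      \<in> N \<rightarrow>\<^sub>M count_space UNIV"
    by (rule measurable_compose_countable[OF step_measurable[OF sel]])
       (use kK Suc in \<open>auto intro: Dm Xm Rm nn\<close>)
  then show ?case by simp
qed

section \<open>The probabilistic model\<close>

locale selection_model =
  fixes M :: "'a measure" and D :: "nat \<Rightarrow> nat \<Rightarrow> 'a \<Rightarrow> nat" and X R :: "nat \<Rightarrow> nat \<Rightarrow> 'a \<Rightarrow> real"
  assumes std: "standing_setup M D X R"
begin

sublocale prob_space M using std by (simp add: standing_setup_def)

abbreviation "V \<equiv> all_vars D X R"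

lemma D_meas: "D n k \<in> M \<rightarrow>\<^sub>M count_space UNIV" using std by (simp add: standing_setup_def)
lemma X_meas: "X n k \<in> borel_measurable M" using std by (simp add: standing_setup_def)
lemma R_meas: "R n k \<in> borel_measurable M" using std by (simp add: standing_setup_def)
lemma X_nonneg: "\<omega> \<in> space M \<Longrightarrow> 0 \<le> X n k \<omega>" using std by (simp add: standing_setup_def)
lemma R_nonneg: "\<omega> \<in> space M \<Longrightarrow> 0 \<le> R n k \<omega>" using std by (simp add: standing_setup_def)
lemma indep_V: "indep_vars (\<lambda>_. borel) V var_index" using std by (simp add: standing_setup_def)

lemma V_simps:
  "V (0, n, j) = (\<lambda>\<omega>. real (D n j \<omega>))" "V (Suc 0, n, j) = X n j" "V (1, n, j) = X n j"
  "V (2, n, j) = R n j"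
  by (simp_all add: all_vars_def)

lemma V_meas: "V i \<in> borel_measurable M"
proof -
  obtain c n j where i: "i = (c, n, j)" by (cases i) auto
  show ?thesis
    using measurable_real_of_nat[OF D_meas] X_meas R_meas unfolding i all_vars_def by auto
qed

definition var_events :: "nat \<times> nat \<times> nat \<Rightarrow> 'a set set" where
  "var_events i = sigma_sets (space M) {V i -` A \<inter> space M | A. A \<in> sets borel}"

lemma var_generators_Pow: "{V i -` A \<inter> space M | A. A \<in> sets borel} \<subseteq> Pow (space M)"
  by auto

lemma var_events_Pow: "var_events i \<subseteq> Pow (space M)"
  unfolding var_events_def using sigma_sets_into_sp[OF var_generators_Pow] by blast

definition past :: "nat \<Rightarrow> (nat \<times> nat \<times> nat) set" where
  "past k = {(c, n, j). c < 3 \<and> 1 \<le> j \<and> n < k}"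

definition generation :: "nat \<Rightarrow> (nat \<times> nat \<times> nat) set" where
  "generation k = {(c, n, j). c < 3 \<and> 1 \<le> j \<and> n = k}"

definition sigma_of :: "(nat \<times> nat \<times> nat) set \<Rightarrow> 'a measure" where
  "sigma_of I = sigma (space M) (\<Union>i\<in>I. var_events i)"

lemma sets_sigma_of: "sets (sigma_of I) = sigma_sets (space M) (\<Union>i\<in>I. var_events i)"
  unfolding sigma_of_def by (rule sets_measure_of) (use var_events_Pow in blast)

lemma space_sigma_of: "space (sigma_of I) = space M"
  unfolding sigma_of_def by (rule space_measure_of) (use var_events_Pow in blast)

lemma sets_sigma_of_subset: "sets (sigma_of I) \<subseteq> sets M"
proof -
  have "(\<Union>i\<in>I. var_events i) \<subseteq> sets M"
  proof (intro UN_least subsetI)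
    fix i S assume "S \<in> var_events i"
    then show "S \<in> sets M" unfolding var_events_def
    proof (induction rule: sigma_sets.induct)
      case (Basic a) then show ?case using V_meas[of i] by (auto simp: measurable_def)
    qed auto
  qed
  then show ?thesis unfolding sets_sigma_of by (rule sets.sigma_sets_subset)
qed

lemma V_sigma_of: assumes "i \<in> I" shows "V i \<in> borel_measurable (sigma_of I)"
proof (rule measurableI)
  fix x assume "x \<in> space (sigma_of I)" then show "V i x \<in> space borel" by simp
next
  fix A :: "real set" assume "A \<in> sets borel"
  then have "V i -` A \<inter> space M \<in> var_events i"
    unfolding var_events_def by (auto intro: sigma_sets.Basic)
  then have "V i -` A \<inter> space M \<in> sets (sigma_of I)"
    unfolding sets_sigma_of using assms by (auto intro: sigma_sets.Basic)
  then show "V i -` A \<inter> space (sigma_of I) \<in> sets (sigma_of I)" by (simp add: space_sigma_of)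
qed

text \<open>Events of the past and of generation \<open>k\<close> are independent: the two index sets are
  disjoint, so this is grouping of an independent family.\<close>

lemma indep_past_generation:
  assumes A: "A \<in> sets (sigma_of (past k))" and B: "B \<in> sets (sigma_of (generation k))"
  shows "prob (A \<inter> B) = prob A * prob B"
proof -
  define I' where "I' = (\<lambda>b::bool. if b then past k else generation k)"
  have sub: "(\<Union>b. I' b) \<subseteq> var_index"
    unfolding I'_def past_def generation_def var_index_def by auto
  have ind: "indep_sets var_events (\<Union>b\<in>UNIV. I' b)"
    using indep_sets_mono_index[OF sub] indep_V unfolding indep_vars_def var_events_def by blast
  have IS: "Int_stable (var_events i)" for i
    using sigma_algebra_sigma_sets[OF var_generators_Pow[of i]] unfolding sigma_algebra_def var_events_def
    by (auto intro: algebra.Int_stable)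
  have dj: "disjoint_family_on I' UNIV"
    unfolding disjoint_family_on_def I'_def past_def generation_def by auto
  have ind2: "indep_sets (\<lambda>b. sigma_sets (space M) (\<Union>i\<in>I' b. var_events i)) UNIV"
    by (rule indep_sets_collect_sigma[OF ind IS dj])
  define F where "F = (\<lambda>b::bool. if b then A else B)"
  have "prob (\<Inter>b\<in>UNIV. F b) = (\<Prod>b\<in>UNIV. prob (F b))"
  proof (rule indep_setsD[OF ind2])
    show "\<forall>b\<in>UNIV. F b \<in> sigma_sets (space M) (\<Union>i\<in>I' b. var_events i)"
      using A B unfolding F_def I'_def sets_sigma_of by auto
  qed auto
  moreover have "(\<Inter>b\<in>UNIV. F b) = A \<inter> B" unfolding F_def UNIV_bool by auto
  moreover have "(\<Prod>b\<in>UNIV. prob (F b)) = prob A * prob B" unfolding F_def UNIV_bool by simp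
  ultimately show ?thesis by simp
qed

lemma sel_proc_past:
  assumes sel: "sel = Nsel \<or> sel = Msel" and n: "n \<le> k"
  shows "sel_proc sel D X R n \<in> sigma_of (past k) \<rightarrow>\<^sub>M count_space UNIV"
proof (rule sel_proc_measurable[OF sel _ _ _ _ n])
  show "D m j \<in> sigma_of (past k) \<rightarrow>\<^sub>M count_space UNIV" if "m < k" "1 \<le> j" for m j
    using V_sigma_of[of "(0, m, j)"] that by (intro measurable_natI) (simp add: past_def V_simps)
  show "X m j \<in> borel_measurable (sigma_of (past k))" if "m < k" "1 \<le> j" for m j
    using V_sigma_of[of "(1, m, j)"] that by (simp add: past_def V_simps)
  show "R m j \<in> borel_measurable (sigma_of (past k))" if "m < k" "1 \<le> j" for m j
    using V_sigma_of[of "(2, m, j)"] that by (simp add: past_def V_simps)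
  show "0 \<le> X m j \<omega>" if "\<omega> \<in> space (sigma_of (past k))" for \<omega> m j
    using that X_nonneg by (simp add: space_sigma_of)
qed

lemma step_generation:
  assumes sel: "sel = Nsel \<or> sel = Msel"
  shows "(\<lambda>\<omega>. sel (Dsum D k w \<omega>) (\<lambda>j. X k j \<omega>) (Rsum R k w \<omega>)) \<in> sigma_of (generation k) \<rightarrow>\<^sub>M count_space UNIV"
proof (rule step_measurable[OF sel])
  show "D k j \<in> sigma_of (generation k) \<rightarrow>\<^sub>M count_space UNIV" if "1 \<le> j" for j
    using V_sigma_of[of "(0, k, j)"] that by (intro measurable_natI) (simp add: generation_def V_simps)
  show "X k j \<in> borel_measurable (sigma_of (generation k))" if "1 \<le> j" for j
    using V_sigma_of[of "(1, k, j)"] that by (simp add: generation_def V_simps)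
  show "R k j \<in> borel_measurable (sigma_of (generation k))" if "1 \<le> j" for j
    using V_sigma_of[of "(2, k, j)"] that by (simp add: generation_def V_simps)
  show "0 \<le> X k j \<omega>" if "\<omega> \<in> space (sigma_of (generation k))" for \<omega> j
    using that X_nonneg by (simp add: space_sigma_of)
qed

lemma sel_proc_meas:
  assumes sel: "sel = Nsel \<or> sel = Msel"
  shows "sel_proc sel D X R n \<in> M \<rightarrow>\<^sub>M count_space UNIV"
  by (rule sel_proc_measurable[OF sel _ _ _ _ order_refl]) (auto intro: D_meas X_meas R_meas X_nonneg)

lemma distr_V:
  assumes c: "c < 3" and j: "1 \<le> j"
  shows "distr M borel (V (c,k,j)) = distr M borel (V (c,0,1))"
proof -
  have rm: "(real :: nat \<Rightarrow> real) \<in> count_space UNIV \<rightarrow>\<^sub>M borel" by (simp add: measurable_count_space_eq1)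
  have dD0: "\<forall>n k. 1 \<le> k \<longrightarrow> distr M (count_space UNIV) (D n k) = distr M (count_space UNIV) (D 0 1)"
    using std unfolding standing_setup_def by blast
  have dX0: "\<forall>n k. 1 \<le> k \<longrightarrow> distr M borel (X n k) = distr M borel (X 0 1)"
    using std unfolding standing_setup_def by blast
  have dR0: "\<forall>n k. 1 \<le> k \<longrightarrow> distr M borel (R n k) = distr M borel (R 0 1)"
    using std unfolding standing_setup_def by blast
  have dD: "distr M (count_space UNIV) (D k j) = distr M (count_space UNIV) (D 0 1)"
    using dD0 j by blast
  have dX: "distr M borel (X k j) = distr M borel (X 0 1)" using dX0 j by blast
  have dR: "distr M borel (R k j) = distr M borel (R 0 1)" using dR0 j by blast
  have c0: "distr M borel (\<lambda>\<omega>. real (D n j' \<omega>)) = distr (distr M (count_space UNIV) (D n j')) borel real" for n j'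
    by (subst distr_distr[OF rm D_meas]) (simp add: comp_def)
  consider "c = 0" | "c = 1" | "c = 2" using c by linarith
  then show ?thesis
  proof cases
    case 1 then show ?thesis using c0[of k j] c0[of 0 1] dD by (simp add: V_simps)
  next
    case 2 then show ?thesis using dX by (simp add: V_simps)
  next
    case 3 then show ?thesis using dR by (simp add: V_simps)
  qed
qed

lemma distr_fV:
  assumes c: "c < 3" and j: "1 \<le> j" and f: "f \<in> borel_measurable borel"
  shows "distr M borel (\<lambda>\<omega>. f (V (c,k,j) \<omega>)) = distr M borel (\<lambda>\<omega>. f (V (c,0,1) \<omega>))"
proof -
  have "distr M borel (\<lambda>\<omega>. f (V (c,k,j) \<omega>)) = distr (distr M borel (V (c,k,j))) borel f"
    using distr_distr[OF f V_meas] by (simp add: comp_def)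
  also have "\<dots> = distr (distr M borel (V (c,0,1))) borel f" by (simp only: distr_V[OF c j])
  also have "\<dots> = distr M borel (\<lambda>\<omega>. f (V (c,0,1) \<omega>))"
    using distr_distr[OF f V_meas] by (simp add: comp_def)
  finally show ?thesis .
qed

lemma hoeffding_row:
  assumes c: "c < 3" and I: "finite I" "I \<noteq> {}" "\<forall>j\<in>I. 1 \<le> j"
    and f: "f \<in> borel_measurable borel"
    and ae: "AE \<omega> in M. f (V (c,0,1) \<omega>) \<in> {lo..hi}" and ab: "lo < hi" and eta: "0 \<le> \<eta>"
  shows "prob {\<omega>\<in>space M. (\<Sum>j\<in>I. f (V (c,k,j) \<omega>)) / real (card I) \<le> expectation (\<lambda>\<omega>. f (V (c,0,1) \<omega>)) - \<eta>}
            \<le> exp (-2 * real (card I) * \<eta>\<^sup>2 / (hi - lo)\<^sup>2)" (is ?A)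
    and "prob {\<omega>\<in>space M. (\<Sum>j\<in>I. f (V (c,k,j) \<omega>)) / real (card I) \<ge> expectation (\<lambda>\<omega>. f (V (c,0,1) \<omega>)) + \<eta>}
            \<le> exp (-2 * real (card I) * \<eta>\<^sup>2 / (hi - lo)\<^sup>2)" (is ?B)
proof -
  define T where "T = (\<lambda>j. (c,k,j)) ` I"
  have inj: "inj_on (\<lambda>j. (c,k,j)) I" by (auto simp: inj_on_def)
  have T: "finite T" "T \<noteq> {}" using I by (auto simp: T_def)
  have Tsub: "T \<subseteq> var_index" using I c by (auto simp: T_def var_index_def)
  have indT: "indep_vars (\<lambda>_. borel) (\<lambda>i \<omega>. f (V i \<omega>)) T"
    by (rule indep_vars_compose2[OF indep_vars_subset[OF indep_V Tsub]]) (rule f)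
  have Ym: "(\<lambda>\<omega>. f (V (c,0,1) \<omega>)) \<in> borel_measurable M"
    using measurable_compose[OF V_meas f] .
  interpret H: Hoeffding_ineq_iid M T "\<lambda>i \<omega>. f (V i \<omega>)" "\<lambda>\<omega>. f (V (c,0,1) \<omega>)" lo hi "expectation (\<lambda>\<omega>. f (V (c,0,1) \<omega>))"
  proof unfold_locales
    show "finite T" by (rule T(1))
    show "indep_vars (\<lambda>_. borel) (\<lambda>i \<omega>. f (V i \<omega>)) T" by (rule indT)
    show "distr M borel (\<lambda>\<omega>. f (V i \<omega>)) = distr M borel (\<lambda>\<omega>. f (V (c,0,1) \<omega>))" if "i \<in> T" for i
    proof -
      from that obtain j where j: "j \<in> I" "i = (c,k,j)" by (auto simp: T_def)
      then have "1 \<le> j" using I by auto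
      from distr_fV[OF c this f, of k] show ?thesis using j by simp
    qed
    show "(\<lambda>\<omega>. f (V (c,0,1) \<omega>)) \<in> borel_measurable M" by (rule Ym)
    show "AE \<omega> in M. f (V (c,0,1) \<omega>) \<in> {lo..hi}" by (rule ae)
  qed (rule reflexive)
  have sr: "(\<Sum>i\<in>T. f (V i \<omega>)) = (\<Sum>j\<in>I. f (V (c,k,j) \<omega>))" for \<omega>
    unfolding T_def by (simp add: sum.reindex[OF inj])
  have cT: "card T = card I" unfolding T_def using card_image[OF inj] .
  show ?A using H.Hoeffding_ineq_le'[OF eta ab T(2)] by (simp add: sr cT)
  show ?B using H.Hoeffding_ineq_ge'[OF eta ab T(2)] by (simp add: sr cT)
qed

end

section \<open>The one-generation estimate\<close>

lemma exp_neg_le_inverse: "0 < (x::real) \<Longrightarrow> exp (- x) \<le> 1 / x"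
proof -
  assume x: "0 < x"
  have "x \<le> exp x" using exp_ge_add_one_self[of x] by linarith
  then have "1 / exp x \<le> 1 / x" using x by (intro divide_left_mono) auto
  then show ?thesis by (simp add: exp_minus field_simps)
qed

text \<open>Choice of the tolerance \<open>\<eta>\<close> in the one-step estimate: small enough that the
  perturbed means still give growth factor \<open>g\<close> and still respect the budget \<open>r\<close>.\<close>

lemma margin_exists:
  fixes mm q e r g :: real
  assumes m1: "1 < mm" and g0: "0 < g" and gq: "g < mm * q" and er: "mm * e < r"
  shows "\<exists>\<eta>>0. g < (q - \<eta>) * (mm - \<eta>) \<and> (e + \<eta>) * (mm + \<eta>) + \<eta> < r \<and> \<eta> < q \<and> \<eta> < mm - 1"
proof -
  have q0: "0 < q"
  proof (rule ccontr)
    assume "\<not> 0 < q"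
    then have "mm * q \<le> 0" using m1 by (intro mult_nonneg_nonpos) auto
    then show False using g0 gq by linarith
  qed
  have t1: "((\<lambda>\<eta>. (q - \<eta>) * (mm - \<eta>)) \<longlongrightarrow> (q - 0) * (mm - 0)) (at_right (0::real))"
    by (intro tendsto_intros)
  have t2: "((\<lambda>\<eta>. (e + \<eta>) * (mm + \<eta>) + \<eta>) \<longlongrightarrow> (e + 0) * (mm + 0) + 0) (at_right (0::real))"
    by (intro tendsto_intros)
  have t3: "((\<lambda>\<eta>::real. \<eta>) \<longlongrightarrow> 0) (at_right (0::real))" by (intro tendsto_intros)
  have "eventually (\<lambda>\<eta>. g < (q - \<eta>) * (mm - \<eta>)) (at_right 0)"
    using order_tendstoD(1)[OF t1, of g] gq by (simp add: mult.commute)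
  moreover have "eventually (\<lambda>\<eta>. (e + \<eta>) * (mm + \<eta>) + \<eta> < r) (at_right 0)"
    using order_tendstoD(2)[OF t2, of r] er by (simp add: mult.commute)
  moreover have "eventually (\<lambda>\<eta>. \<eta> < q) (at_right 0)"
    using order_tendstoD(2)[OF t3, of q] q0 by simp
  moreover have "eventually (\<lambda>\<eta>. \<eta> < mm - 1) (at_right 0)"
    using order_tendstoD(2)[OF t3, of "mm - 1"] m1 by simp
  moreover have "eventually (\<lambda>\<eta>. 0 < \<eta>) (at_right (0::real))" by (rule eventually_at_right_less)
  ultimately have "eventually (\<lambda>\<eta>. g < (q - \<eta>) * (mm - \<eta>) \<and> (e + \<eta>) * (mm + \<eta>) + \<eta> < r \<and>
      \<eta> < q \<and> \<eta> < mm - 1 \<and> 0 < \<eta>) (at_right 0)"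
    by (intro eventually_conj)
  then show ?thesis
    using eventually_happens'[OF trivial_limit_at_right_real] by blast
qed

text \<open>Integer window \<open>[a, b]\<close> for the number of offspring of \<open>w\<close> individuals.\<close>

lemma count_window:
  fixes mm \<eta> :: real
  assumes w: "1 \<le> w" and \<eta>: "0 < \<eta>" "\<eta> < mm - 1"
  shows "(mm - \<eta>) * real w \<le> real (nat \<lceil>(mm - \<eta>) * real w\<rceil>)" "w \<le> nat \<lceil>(mm - \<eta>) * real w\<rceil>"
    and "real (nat \<lfloor>(mm + \<eta>) * real w\<rfloor>) \<le> (mm + \<eta>) * real w" "w \<le> nat \<lfloor>(mm + \<eta>) * real w\<rfloor>"
proof -
  have w0: "0 < real w" using w by simp
  have ya: "real w \<le> (mm - \<eta>) * real w" using mult_right_mono[of 1 "mm - \<eta>" "real w"] \<eta> by simp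
  have yb: "real w \<le> (mm + \<eta>) * real w" using mult_right_mono[of 1 "mm + \<eta>" "real w"] \<eta> by simp
  have c1: "(mm - \<eta>) * real w \<le> of_int \<lceil>(mm - \<eta>) * real w\<rceil>" by (rule le_of_int_ceiling)
  then have "0 \<le> \<lceil>(mm - \<eta>) * real w\<rceil>" using ya w0 by linarith
  then have ra: "real (nat \<lceil>(mm - \<eta>) * real w\<rceil>) = of_int \<lceil>(mm - \<eta>) * real w\<rceil>" by simp
  show "(mm - \<eta>) * real w \<le> real (nat \<lceil>(mm - \<eta>) * real w\<rceil>)" using c1 ra by simp
  then show "w \<le> nat \<lceil>(mm - \<eta>) * real w\<rceil>" using ya by linarith
  have "int w \<le> \<lfloor>(mm + \<eta>) * real w\<rfloor>" using yb by (simp add: le_floor_iff)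
  then show "w \<le> nat \<lfloor>(mm + \<eta>) * real w\<rfloor>" by linarith
  from \<open>int w \<le> _\<close> have "0 \<le> \<lfloor>(mm + \<eta>) * real w\<rfloor>" by linarith
  then have "real (nat \<lfloor>(mm + \<eta>) * real w\<rfloor>) = of_int \<lfloor>(mm + \<eta>) * real w\<rfloor>" by simp
  then show "real (nat \<lfloor>(mm + \<eta>) * real w\<rfloor>) \<le> (mm + \<eta>) * real w" by simp
qed

lemma growth_on_typical_sample:
  fixes d :: "nat \<Rightarrow> nat" and x \<rho> :: "nat \<Rightarrow> real" and Q :: "real \<Rightarrow> bool"
    and sel :: "nat \<Rightarrow> (nat \<Rightarrow> real) \<Rightarrow> real \<Rightarrow> nat"
  assumes lbsel: "\<And>t x s. (\<forall>j\<in>{1..t}. 0 \<le> x j) \<Longrightarrow> (\<Sum>j\<in>{j\<in>{1..t}. Q (x j)}. x j) \<le> s \<Longrightarrow>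
        card {j\<in>{1..t}. Q (x j)} \<le> sel t x s"
    and nn: "\<And>j. 0 \<le> x j" and w: "1 \<le> w"
    and a: "a = nat \<lceil>(mm - \<eta>) * real w\<rceil>" and b: "b = nat \<lfloor>(mm + \<eta>) * real w\<rfloor>"
    and \<eta>: "0 < \<eta>" "\<eta> < q" "\<eta> < mm - 1" and e0: "0 \<le> e"
    and grow: "g < (q - \<eta>) * (mm - \<eta>)" and budget: "(e + \<eta>) * (mm + \<eta>) + \<eta> < r"
    and d_low: "mm - \<eta> < (\<Sum>j\<in>{1..w}. real (d j)) / real w"
    and d_high: "(\<Sum>j\<in>{1..w}. real (d j)) / real w < mm + \<eta>"
    and frac: "q - \<eta> < (\<Sum>j\<in>{1..a}. if Q (x j) then 1 else 0) / real a"
    and mass: "(\<Sum>j\<in>{1..b}. if Q (x j) then x j else 0) / real b < e + \<eta>"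
    and res: "r - \<eta> < (\<Sum>j\<in>{1..w}. \<rho> j) / real w"
  shows "g * real w < real (sel (\<Sum>j=1..w. d j) x (\<Sum>j=1..w. \<rho> j))"
proof -
  define t where "t = (\<Sum>j=1..w. d j)"
  let ?C = "{j\<in>{1..t}. Q (x j)}"
  have w0: "0 < real w" using w by simp
  note win = count_window[OF w \<eta>(1,3)]
  have "1 \<le> a" "1 \<le> b" using win(2,4) w unfolding a b by linarith+
  then have a0: "0 < real a" and b0: "0 < real b" by auto
  have rt: "real t = (\<Sum>j\<in>{1..w}. real (d j))" unfolding t_def by simp
  have "(mm - \<eta>) * real w < real t" using d_low w0 rt by (simp add: pos_less_divide_eq)
  then have at: "a \<le> t" unfolding a by (simp add: ceiling_le_iff nat_le_iff)
  have "real t < (mm + \<eta>) * real w" using d_high w0 rt by (simp add: pos_divide_less_eq)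
  then have tb: "t \<le> b" unfolding b by (simp add: le_floor_iff le_nat_iff)
  have "(\<Sum>j\<in>{1..a}. if Q (x j) then 1 else 0) = real (card {j\<in>{1..a}. Q (x j)})"
    by (simp add: sum.If_cases Int_def)
  also have "\<dots> \<le> real (card ?C)" using at by (intro of_nat_mono card_mono) auto
  finally have count: "(\<Sum>j\<in>{1..a}. if Q (x j) then 1 else 0) \<le> real (card ?C)" .
  have "g * real w < (q - \<eta>) * ((mm - \<eta>) * real w)"
    using mult_strict_right_mono[OF grow w0] by (simp add: mult.assoc)
  also have "\<dots> \<le> (q - \<eta>) * real a"
    using win(1) \<eta> unfolding a by (intro mult_left_mono) auto
  also have "\<dots> < (\<Sum>j\<in>{1..a}. if Q (x j) then 1 else 0)"
    using frac a0 by (simp add: pos_less_divide_eq)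
  finally have many: "g * real w < real (card ?C)" using count by linarith
  have "(\<Sum>j\<in>?C. x j) = (\<Sum>j\<in>{1..t}. if Q (x j) then x j else 0)"
    by (rule sum.inter_filter) simp
  also have "\<dots> \<le> (\<Sum>j\<in>{1..b}. if Q (x j) then x j else 0)"
    by (rule sum_mono2) (use tb nn in auto)
  also have "\<dots> < (e + \<eta>) * real b" using mass b0 by (simp add: pos_divide_less_eq)
  also have "\<dots> \<le> (e + \<eta>) * ((mm + \<eta>) * real w)"
    using win(3) e0 \<eta> unfolding b by (intro mult_left_mono) auto
  also have "\<dots> < (r - \<eta>) * real w"
    using budget w0 by (simp add: mult.assoc[symmetric] mult_strict_right_mono)
  also have "\<dots> < (\<Sum>j\<in>{1..w}. \<rho> j)" using res w0 by (simp add: pos_less_divide_eq)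
  finally have "card ?C \<le> sel t x (\<Sum>j=1..w. \<rho> j)"
    by (intro lbsel) (use nn in auto)
  then show ?thesis using many unfolding t_def by linarith
qed

context selection_model
begin

text \<open>Hoeffding bound in the weakened form \<open>O(1/w)\<close> used below: it holds uniformly for all
  averages over at least \<open>w\<close> variables.\<close>

lemma row_deviation:
  assumes c: "c < 3" and w: "1 \<le> w" "w \<le> n" and f: "f \<in> borel_measurable borel"
    and ae: "AE \<omega> in M. f (V (c,0,1) \<omega>) \<in> {0..B}" and B: "0 < B" and \<eta>: "0 < \<eta>"
  shows "prob {\<omega>\<in>space M. (\<Sum>j\<in>{1..n}. f (V (c,k,j) \<omega>)) / real n \<le> expectation (\<lambda>\<omega>. f (V (c,0,1) \<omega>)) - \<eta>}
           \<le> B\<^sup>2 / (2 * \<eta>\<^sup>2) / real w" (is ?lower)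
    and "prob {\<omega>\<in>space M. (\<Sum>j\<in>{1..n}. f (V (c,k,j) \<omega>)) / real n \<ge> expectation (\<lambda>\<omega>. f (V (c,0,1) \<omega>)) + \<eta>}
           \<le> B\<^sup>2 / (2 * \<eta>\<^sup>2) / real w" (is ?upper)
proof -
  have I: "finite {1..n}" "{1..n} \<noteq> {}" "\<forall>j\<in>{1..n}. 1 \<le> j" using w by auto
  have w0: "0 < real w" using w by simp
  have "2 * real w * \<eta>\<^sup>2 / B\<^sup>2 \<le> 2 * real n * \<eta>\<^sup>2 / B\<^sup>2"
    using w by (intro divide_right_mono mult_right_mono) auto
  then have "exp (- 2 * real n * \<eta>\<^sup>2 / (B - 0)\<^sup>2) \<le> exp (- (2 * real w * \<eta>\<^sup>2 / B\<^sup>2))"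
    by (intro exp_mono) simp
  also have "\<dots> \<le> 1 / (2 * real w * \<eta>\<^sup>2 / B\<^sup>2)" using w0 \<eta> B by (intro exp_neg_le_inverse) simp
  also have "\<dots> = B\<^sup>2 / (2 * \<eta>\<^sup>2) / real w" using B \<eta> w0 by (simp add: field_simps)
  finally have poly: "exp (- 2 * real (card {1..n}) * \<eta>\<^sup>2 / (B - 0)\<^sup>2) \<le> B\<^sup>2 / (2 * \<eta>\<^sup>2) / real w"
    by simp
  note h = hoeffding_row[where k=k, OF c I f ae B less_imp_le[OF \<eta>]]
  show ?lower using h(1) poly by simp
  show ?upper using h(2) poly by simp
qed

lemma deviation_D:
  assumes w: "1 \<le> w" and ae: "AE \<omega> in M. real (D 0 1 \<omega>) \<in> {0..B}" and B: "0 < B" and \<eta>: "0 < \<eta>"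
  shows "prob {\<omega>\<in>space M. (\<Sum>j\<in>{1..w}. real (D k j \<omega>)) / real w \<le> mD M D - \<eta>} \<le> B\<^sup>2 / (2 * \<eta>\<^sup>2) / real w"
    and "prob {\<omega>\<in>space M. (\<Sum>j\<in>{1..w}. real (D k j \<omega>)) / real w \<ge> mD M D + \<eta>} \<le> B\<^sup>2 / (2 * \<eta>\<^sup>2) / real w"
proof -
  have ae': "AE \<omega> in M. (\<lambda>x. x) (V (0,0,1) \<omega>) \<in> {0..B}" using ae by (simp add: V_simps)
  note h = row_deviation[where c=0 and f="\<lambda>x. x" and k=k, OF _ w order_refl _ ae' B \<eta>]
  show "prob {\<omega>\<in>space M. (\<Sum>j\<in>{1..w}. real (D k j \<omega>)) / real w \<le> mD M D - \<eta>} \<le> B\<^sup>2 / (2 * \<eta>\<^sup>2) / real w"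
    using h(1) by (simp add: V_simps mD_def)
  show "prob {\<omega>\<in>space M. (\<Sum>j\<in>{1..w}. real (D k j \<omega>)) / real w \<ge> mD M D + \<eta>} \<le> B\<^sup>2 / (2 * \<eta>\<^sup>2) / real w"
    using h(2) by (simp add: V_simps mD_def)
qed

lemma deviation_R:
  assumes w: "1 \<le> w" and ae: "AE \<omega> in M. R 0 1 \<omega> \<in> {0..B}" and B: "0 < B" and \<eta>: "0 < \<eta>"
  shows "prob {\<omega>\<in>space M. (\<Sum>j\<in>{1..w}. R k j \<omega>) / real w \<le> rR M R - \<eta>} \<le> B\<^sup>2 / (2 * \<eta>\<^sup>2) / real w"
proof -
  have ae': "AE \<omega> in M. (\<lambda>x. x) (V (2,0,1) \<omega>) \<in> {0..B}" using ae by (simp add: V_simps)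
  show ?thesis
    using row_deviation(1)[where c=2 and f="\<lambda>x. x" and k=k, OF _ w order_refl _ ae' B \<eta>]
    by (simp add: V_simps rR_def)
qed

lemma deviation_X:
  assumes w: "1 \<le> w" "w \<le> n" and f: "f \<in> borel_measurable borel"
    and ae: "AE \<omega> in M. f (X 0 1 \<omega>) \<in> {0..B}" and B: "0 < B" and \<eta>: "0 < \<eta>"
  shows "prob {\<omega>\<in>space M. (\<Sum>j\<in>{1..n}. f (X k j \<omega>)) / real n \<le> expectation (\<lambda>\<omega>. f (X 0 1 \<omega>)) - \<eta>}
           \<le> B\<^sup>2 / (2 * \<eta>\<^sup>2) / real w"
    and "prob {\<omega>\<in>space M. (\<Sum>j\<in>{1..n}. f (X k j \<omega>)) / real n \<ge> expectation (\<lambda>\<omega>. f (X 0 1 \<omega>)) + \<eta>}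
           \<le> B\<^sup>2 / (2 * \<eta>\<^sup>2) / real w"
proof -
  have ae': "AE \<omega> in M. f (V (1,0,1) \<omega>) \<in> {0..B}" using ae by (simp add: V_simps)
  note h = row_deviation[where c=1 and k=k, OF _ w f ae' B \<eta>]
  show "prob {\<omega>\<in>space M. (\<Sum>j\<in>{1..n}. f (X k j \<omega>)) / real n \<le> expectation (\<lambda>\<omega>. f (X 0 1 \<omega>)) - \<eta>}
           \<le> B\<^sup>2 / (2 * \<eta>\<^sup>2) / real w"
    using h(1) by (simp add: V_simps)
  show "prob {\<omega>\<in>space M. (\<Sum>j\<in>{1..n}. f (X k j \<omega>)) / real n \<ge> expectation (\<lambda>\<omega>. f (X 0 1 \<omega>)) + \<eta>}
           \<le> B\<^sup>2 / (2 * \<eta>\<^sup>2) / real w"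
    using h(2) by (simp add: V_simps)
qed

lemma prob_union5:
  assumes "E1 \<in> sets M" "E2 \<in> sets M" "E3 \<in> sets M" "E4 \<in> sets M" "E5 \<in> sets M"
  shows "prob (E1 \<union> E2 \<union> E3 \<union> E4 \<union> E5) \<le> prob E1 + prob E2 + prob E3 + prob E4 + prob E5"
  using measure_Un_le[of "E1 \<union> E2 \<union> E3 \<union> E4" M E5] measure_Un_le[of "E1 \<union> E2 \<union> E3" M E4]
    measure_Un_le[of "E1 \<union> E2" M E3] measure_Un_le[of E1 M E2] assms by auto

text \<open>One-step estimate for a given tolerance \<open>\<eta>\<close>: a generation of size \<open>w\<close> grows by at most
  the factor \<open>g\<close> only if one of five empirical averages deviates by \<open>\<eta>\<close> from its mean
  (\<open>growth_on_typical_sample\<close>), which has probability \<open>O(1/w)\<close> by Hoeffding's inequality.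
  Here \<open>Q\<close> describes the individuals that the selection rule is guaranteed to keep when
  they fit the budget.\<close>

lemma slow_step_prob:
  fixes Q :: "real \<Rightarrow> bool" and sel :: "nat \<Rightarrow> (nat \<Rightarrow> real) \<Rightarrow> real \<Rightarrow> nat"
  defines "q \<equiv> expectation (\<lambda>\<omega>. if Q (X 0 1 \<omega>) then 1 else 0::real)"
    and "e \<equiv> expectation (\<lambda>\<omega>. if Q (X 0 1 \<omega>) then X 0 1 \<omega> else 0)"
  assumes lbsel: "\<And>t x s. (\<forall>j\<in>{1..t}. 0 \<le> x j) \<Longrightarrow> (\<Sum>j\<in>{j\<in>{1..t}. Q (x j)}. x j) \<le> s \<Longrightarrow>
        card {j\<in>{1..t}. Q (x j)} \<le> sel t x s"
    and Qm: "{x. Q x} \<in> sets borel"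
    and B1: "1 \<le> B" and Bae: "AE \<omega> in M. real (D 0 1 \<omega>) \<le> B \<and> X 0 1 \<omega> \<le> B \<and> R 0 1 \<omega> \<le> B"
    and \<eta>: "0 < \<eta>" "\<eta> < q" "\<eta> < mD M D - 1"
    and grow: "g < (q - \<eta>) * (mD M D - \<eta>)" and budget: "(e + \<eta>) * (mD M D + \<eta>) + \<eta> < rR M R"
    and w: "1 \<le> w"
  shows "prob {\<omega>\<in>space M. real (sel (Dsum D k w \<omega>) (\<lambda>j. X k j \<omega>) (Rsum R k w \<omega>)) \<le> g * real w}
    \<le> 5 * (B\<^sup>2 / (2 * \<eta>\<^sup>2)) / real w"
proof -
  define mm where "mm = mD M D"
  define r where "r = rR M R"
  define \<beta> where "\<beta> = B\<^sup>2 / (2 * \<eta>\<^sup>2)"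
  have e0: "0 \<le> e" unfolding e_def by (rule Bochner_Integration.integral_nonneg) (auto simp: X_nonneg)
  have B0: "0 < B" using B1 by simp
  have aeD: "AE \<omega> in M. real (D 0 1 \<omega>) \<in> {0..B}" using Bae by eventually_elim auto
  have aeR: "AE \<omega> in M. R 0 1 \<omega> \<in> {0..B}" using Bae AE_space by eventually_elim (auto simp: R_nonneg)
  have aeQ: "AE \<omega> in M. (if Q (X 0 1 \<omega>) then 1 else 0::real) \<in> {0..B}" using B1 by (intro AE_I2) auto
  have aeXQ: "AE \<omega> in M. (if Q (X 0 1 \<omega>) then X 0 1 \<omega> else 0::real) \<in> {0..B}"
    using Bae AE_space by eventually_elim (auto simp: X_nonneg)
  have f1m: "(\<lambda>x::real. if Q x then 1 else 0::real) \<in> borel_measurable borel"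
    by (rule measurable_If[OF borel_measurable_const borel_measurable_const]) (use Qm in simp)
  have f2m: "(\<lambda>x::real. if Q x then x else 0::real) \<in> borel_measurable borel"
    by (rule measurable_If[OF measurable_ident_sets[OF refl] borel_measurable_const]) (use Qm in simp)
  define a where "a = nat \<lceil>(mm - \<eta>) * real w\<rceil>"
  define b where "b = nat \<lfloor>(mm + \<eta>) * real w\<rfloor>"
  have wa: "w \<le> a" and wb: "w \<le> b"
    unfolding a_def b_def using count_window[OF w \<eta>(1) \<eta>(3)[folded mm_def]] by auto
  define E1 where "E1 = {\<omega>\<in>space M. (\<Sum>j\<in>{1..w}. real (D k j \<omega>)) / real w \<le> mm - \<eta>}"
  define E2 where "E2 = {\<omega>\<in>space M. (\<Sum>j\<in>{1..w}. real (D k j \<omega>)) / real w \<ge> mm + \<eta>}"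
  define E3 where "E3 = {\<omega>\<in>space M. (\<Sum>j\<in>{1..a}. if Q (X k j \<omega>) then 1 else 0) / real a \<le> q - \<eta>}"
  define E4 where "E4 = {\<omega>\<in>space M. (\<Sum>j\<in>{1..b}. if Q (X k j \<omega>) then X k j \<omega> else 0) / real b \<ge> e + \<eta>}"
  define E5 where "E5 = {\<omega>\<in>space M. (\<Sum>j\<in>{1..w}. R k j \<omega>) / real w \<le> r - \<eta>}"
  have pE: "prob E1 \<le> \<beta> / real w" "prob E2 \<le> \<beta> / real w" "prob E3 \<le> \<beta> / real w"
    "prob E4 \<le> \<beta> / real w" "prob E5 \<le> \<beta> / real w"
    unfolding E1_def E2_def E3_def E4_def E5_def \<beta>_def mm_def q_def e_def r_def
    by (rule deviation_D[OF w aeD B0 \<eta>(1)] deviation_R[OF w aeR B0 \<eta>(1)]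
        deviation_X(1)[OF w wa f1m aeQ B0 \<eta>(1)] deviation_X(2)[OF w wb f2m aeXQ B0 \<eta>(1)])+
  have mE: "E1 \<in> sets M" "E2 \<in> sets M" "E3 \<in> sets M" "E4 \<in> sets M" "E5 \<in> sets M"
    unfolding E1_def E2_def E3_def E4_def E5_def
    by (intro borel_measurable_le borel_measurable_divide borel_measurable_sum borel_measurable_const
        measurable_real_of_nat[OF D_meas] measurable_compose[OF X_meas f1m]
        measurable_compose[OF X_meas f2m] R_meas)+
  have "{\<omega>\<in>space M. real (sel (Dsum D k w \<omega>) (\<lambda>j. X k j \<omega>) (Rsum R k w \<omega>)) \<le> g * real w}
      \<subseteq> E1 \<union> E2 \<union> E3 \<union> E4 \<union> E5"
  proof (intro subsetI)
    fix \<omega> assume "\<omega> \<in> {\<omega>\<in>space M. real (sel (Dsum D k w \<omega>) (\<lambda>j. X k j \<omega>) (Rsum R k w \<omega>)) \<le> g * real w}"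
    then have sp: "\<omega> \<in> space M"
      and small: "real (sel (Dsum D k w \<omega>) (\<lambda>j. X k j \<omega>) (Rsum R k w \<omega>)) \<le> g * real w" by auto
    show "\<omega> \<in> E1 \<union> E2 \<union> E3 \<union> E4 \<union> E5"
    proof (rule ccontr)
      assume "\<omega> \<notin> E1 \<union> E2 \<union> E3 \<union> E4 \<union> E5"
      then have "g * real w < real (sel (\<Sum>j=1..w. D k j \<omega>) (\<lambda>j. X k j \<omega>) (\<Sum>j=1..w. R k j \<omega>))"
        using sp \<eta> e0 grow budget unfolding mm_def r_def
        by (intro growth_on_typical_sample[OF lbsel _ w a_def[unfolded mm_def] b_def[unfolded mm_def]])
           (auto simp: E1_def E2_def E3_def E4_def E5_def X_nonneg not_le mm_def r_def)
      then show False using small by (simp add: Dsum_def Rsum_def)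
    qed
  qed
  then have "prob {\<omega>\<in>space M. real (sel (Dsum D k w \<omega>) (\<lambda>j. X k j \<omega>) (Rsum R k w \<omega>)) \<le> g * real w}
      \<le> prob (E1 \<union> E2 \<union> E3 \<union> E4 \<union> E5)"
    using mE by (intro finite_measure_mono) auto
  also have "\<dots> \<le> 5 * \<beta> / real w" using prob_union5[OF mE] pE by simp
  finally show ?thesis unfolding \<beta>_def .
qed

lemma step_bound:
  fixes Q :: "real \<Rightarrow> bool" and sel :: "nat \<Rightarrow> (nat \<Rightarrow> real) \<Rightarrow> real \<Rightarrow> nat"
  assumes lbsel: "\<And>t x s. (\<forall>j\<in>{1..t}. 0 \<le> x j) \<Longrightarrow> (\<Sum>j\<in>{j\<in>{1..t}. Q (x j)}. x j) \<le> s \<Longrightarrow>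
        card {j\<in>{1..t}. Q (x j)} \<le> sel t x s"
    and Qm: "{x. Q x} \<in> sets borel"
    and B1: "1 \<le> B" and Bae: "AE \<omega> in M. real (D 0 1 \<omega>) \<le> B \<and> X 0 1 \<omega> \<le> B \<and> R 0 1 \<omega> \<le> B"
    and m1: "1 < mD M D" and g0: "0 < g"
    and gq: "g < mD M D * expectation (\<lambda>\<omega>. if Q (X 0 1 \<omega>) then 1 else 0)"
    and er: "mD M D * expectation (\<lambda>\<omega>. if Q (X 0 1 \<omega>) then X 0 1 \<omega> else 0) < rR M R"
  shows "\<exists>K. \<forall>k w. 1 \<le> w \<longrightarrow>
     prob {\<omega>\<in>space M. real (sel (Dsum D k w \<omega>) (\<lambda>j. X k j \<omega>) (Rsum R k w \<omega>)) \<le> g * real w} \<le> K / real w"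
proof -
  obtain \<eta> where "0 < \<eta>" "\<eta> < expectation (\<lambda>\<omega>. if Q (X 0 1 \<omega>) then 1 else 0)" "\<eta> < mD M D - 1"
    "g < (expectation (\<lambda>\<omega>. if Q (X 0 1 \<omega>) then 1 else 0) - \<eta>) * (mD M D - \<eta>)"
    "(expectation (\<lambda>\<omega>. if Q (X 0 1 \<omega>) then X 0 1 \<omega> else 0) + \<eta>) * (mD M D + \<eta>) + \<eta> < rR M R"
    using margin_exists[OF m1 g0 gq er] by blast
  then show ?thesis
    using slow_step_prob[where Q=Q and sel=sel, OF lbsel Qm B1 Bae] by blast
qed

end

section \<open>The trajectory estimate\<close>

definition conditional_growth :: "'a measure \<Rightarrow> (nat \<Rightarrow> 'a \<Rightarrow> nat) \<Rightarrow> real \<Rightarrow> real \<Rightarrow> real \<Rightarrow> bool" where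
  "conditional_growth M Z c L \<epsilon> \<longleftrightarrow>
    (\<forall>n. measure M {\<omega> \<in> space M. real (Z n \<omega>) \<ge> L} > 0 \<longrightarrow>
       measure M ({\<omega> \<in> space M. \<forall>l. ratio (Z (n + l + 1) \<omega>) (Z (n + l) \<omega>) > c}
                  \<inter> {\<omega> \<in> space M. real (Z n \<omega>) \<ge> L})
       / measure M {\<omega> \<in> space M. real (Z n \<omega>) \<ge> L} \<ge> 1 - \<epsilon>)"

text \<open>If a trajectory starting above \<open>L\<close> ever grows by at most the factor \<open>g > 0\<close>, look at
  the first such generation \<open>n + l\<close>: before it the population grew geometrically, so it is
  at least \<open>L g\<^sup>l\<close> there.\<close>

lemma first_slow_generation:
  fixes Z :: "nat \<Rightarrow> nat"
  assumes L: "0 < L" and g: "0 < g" and start: "L \<le> real (Z n)"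
    and slow: "\<exists>l. \<not> g < ratio (Z (n + l + 1)) (Z (n + l))"
  shows "\<exists>l. L * g ^ l \<le> real (Z (n + l)) \<and> real (Z (n + l + 1)) \<le> g * real (Z (n + l))"
proof -
  define l0 where "l0 = (LEAST l. \<not> g < ratio (Z (n + l + 1)) (Z (n + l)))"
  have l0: "\<not> g < ratio (Z (n + l0 + 1)) (Z (n + l0))" unfolding l0_def by (rule LeastI_ex[OF slow])
  have before: "g < ratio (Z (n + j + 1)) (Z (n + j))" if "j < l0" for j
    using not_less_Least[OF that[unfolded l0_def]] by blast
  have grow: "j \<le> l0 \<Longrightarrow> L * g ^ j \<le> real (Z (n + j))" for j
  proof (induction j)
    case 0 then show ?case using start by simp
  next
    case (Suc j)
    then have IH: "L * g ^ j \<le> real (Z (n + j))" and r: "g < ratio (Z (n + j + 1)) (Z (n + j))"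
      using before by auto
    then have nz: "Z (n + j) \<noteq> 0" using g unfolding ratio_def by (auto split: if_splits)
    then have "g * real (Z (n + j)) < real (Z (n + j + 1))"
      using r unfolding ratio_def by (simp add: pos_less_divide_eq)
    moreover have "g * (L * g ^ j) \<le> g * real (Z (n + j))" using IH g by (intro mult_left_mono) auto
    moreover have "L * g ^ Suc j = g * (L * g ^ j)" "n + Suc j = n + j + 1" by simp_all
    ultimately show ?case by (simp only:)
  qed
  have big: "L * g ^ l0 \<le> real (Z (n + l0))" by (rule grow) simp
  moreover have "0 < L * g ^ l0" using L g by simp
  ultimately have "Z (n + l0) \<noteq> 0" by auto
  then have "real (Z (n + l0 + 1)) / real (Z (n + l0)) \<le> g" using l0 unfolding ratio_def by simp
  then have "real (Z (n + l0 + 1)) \<le> g * real (Z (n + l0))"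
    using \<open>Z (n + l0) \<noteq> 0\<close> by (simp add: pos_divide_le_eq mult.commute)
  with big show ?thesis by blast
qed

context selection_model
begin

lemma ratio_measurable:
  assumes f: "f \<in> M \<rightarrow>\<^sub>M count_space UNIV" and h: "h \<in> M \<rightarrow>\<^sub>M count_space UNIV"
  shows "(\<lambda>\<omega>. ratio (f \<omega>) (h \<omega>)) \<in> borel_measurable M"
proof -
  have "(\<lambda>\<omega>. (\<lambda>i \<omega>. ratio i (h \<omega>)) (f \<omega>) \<omega>) \<in> borel_measurable M"
  proof (rule measurable_compose_countable[OF _ f])
    fix i :: nat
    have "ratio i \<in> count_space UNIV \<rightarrow>\<^sub>M borel" by (simp add: measurable_count_space_eq1)
    then show "(\<lambda>\<omega>. ratio i (h \<omega>)) \<in> borel_measurable M" using measurable_compose[OF h] by blast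
  qed
  then show ?thesis by simp
qed

lemma past_event:
  assumes sel: "sel = Nsel \<or> sel = Msel" and "n \<le> k"
  shows "{\<omega>\<in>space M. L \<le> real (sel_proc sel D X R n \<omega>) \<and> sel_proc sel D X R k \<omega> = w}
    \<in> sets (sigma_of (past k))"
proof -
  have "{\<omega>\<in>space (sigma_of (past k)). L \<le> real (sel_proc sel D X R n \<omega>)} \<in> sets (sigma_of (past k))"
    using assms by (intro borel_measurable_le borel_measurable_const measurable_real_of_nat sel_proc_past)
  moreover have "sel_proc sel D X R k -` {w} \<inter> space (sigma_of (past k)) \<in> sets (sigma_of (past k))"
    by (rule measurable_sets[OF sel_proc_past[OF sel order_refl]]) simp
  ultimately have "{\<omega>\<in>space (sigma_of (past k)). L \<le> real (sel_proc sel D X R n \<omega>)}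
      \<inter> (sel_proc sel D X R k -` {w} \<inter> space (sigma_of (past k))) \<in> sets (sigma_of (past k))" by blast
  moreover have "{\<omega>\<in>space M. L \<le> real (sel_proc sel D X R n \<omega>) \<and> sel_proc sel D X R k \<omega> = w} =
      {\<omega>\<in>space (sigma_of (past k)). L \<le> real (sel_proc sel D X R n \<omega>)}
      \<inter> (sel_proc sel D X R k -` {w} \<inter> space (sigma_of (past k)))"
    unfolding space_sigma_of by auto
  ultimately show ?thesis by simp
qed

lemma step_event:
  assumes sel: "sel = Nsel \<or> sel = Msel"
  shows "{\<omega>\<in>space M. real (sel (Dsum D k w \<omega>) (\<lambda>j. X k j \<omega>) (Rsum R k w \<omega>)) \<le> g * real w}
    \<in> sets (sigma_of (generation k))"
proof -
  have "(\<lambda>\<omega>. real (sel (Dsum D k w \<omega>) (\<lambda>j. X k j \<omega>) (Rsum R k w \<omega>))) \<in> borel_measurable (sigma_of (generation k))"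
    by (rule measurable_real_of_nat[OF step_generation[OF sel]])
  from borel_measurable_le[OF this borel_measurable_const, of "g * real w"]
  show ?thesis unfolding space_sigma_of .
qed

text \<open>Condition on the past up
  to generation \<open>n + l\<close>: the next step is independent of it, and by the one-step bound it is
  slow with probability at most \<open>K / (L g\<^sup>l)\<close>.\<close>

lemma slow_step_bound:
  fixes sel :: "nat \<Rightarrow> (nat \<Rightarrow> real) \<Rightarrow> real \<Rightarrow> nat"
  defines "Z \<equiv> sel_proc sel D X R"
  assumes sel: "sel = Nsel \<or> sel = Msel"
    and Kb: "\<forall>k w. 1 \<le> w \<longrightarrow>
      prob {\<omega>\<in>space M. real (sel (Dsum D k w \<omega>) (\<lambda>j. X k j \<omega>) (Rsum R k w \<omega>)) \<le> g * real w} \<le> K / real w"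
    and K0: "0 \<le> K" and L: "0 < L" and g: "0 < g"
  shows "prob {\<omega>\<in>space M. L \<le> real (Z n \<omega>) \<and> L * g ^ l \<le> real (Z (n + l) \<omega>) \<and>
            real (Z (n + l + 1) \<omega>) \<le> g * real (Z (n + l) \<omega>)}
         \<le> prob {\<omega>\<in>space M. L \<le> real (Z n \<omega>)} * (K / (L * g ^ l))"
proof -
  define k where "k = n + l"
  define step where "step = (\<lambda>w \<omega>. sel (Dsum D k w \<omega>) (\<lambda>j. X k j \<omega>) (Rsum R k w \<omega>))"
  define A where "A = (\<lambda>w::nat. {\<omega>\<in>space M. L \<le> real (Z n \<omega>) \<and> Z k \<omega> = w \<and> L * g ^ l \<le> real w})"
  define F where "F = (\<lambda>w::nat. {\<omega>\<in>space M. real (step w \<omega>) \<le> g * real w})"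
  have next_gen: "Z (n + l + 1) \<omega> = step (Z k \<omega>) \<omega>" for \<omega>
    unfolding Z_def step_def k_def by simp
  have split: "{\<omega>\<in>space M. L \<le> real (Z n \<omega>) \<and> L * g ^ l \<le> real (Z (n + l) \<omega>) \<and>
            real (Z (n + l + 1) \<omega>) \<le> g * real (Z (n + l) \<omega>)} = (\<Union>w. A w \<inter> F w)"
    unfolding A_def F_def next_gen k_def by auto
  have A_past: "A w \<in> sets (sigma_of (past k))" for w
  proof -
    have "A w = (if L * g ^ l \<le> real w then
        {\<omega>\<in>space M. L \<le> real (Z n \<omega>) \<and> Z k \<omega> = w} else {})"
      unfolding A_def by auto
    then show ?thesis using past_event[OF sel, of n k L w] unfolding Z_def k_def by simp
  qed
  have F_gen: "F w \<in> sets (sigma_of (generation k))" for w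
    using step_event[OF sel] unfolding F_def step_def .
  have AM: "A w \<in> sets M" and FM: "F w \<in> sets M" for w
    using A_past F_gen sets_sigma_of_subset by auto
  have start_meas: "{\<omega>\<in>space M. L \<le> real (Z n \<omega>)} \<in> sets M"
    unfolding Z_def by (rule borel_measurable_le[OF borel_measurable_const
        measurable_real_of_nat[OF sel_proc_meas[OF sel]]])
  have Lg: "0 < L * g ^ l" using L g by simp
  have each: "prob (A w \<inter> F w) \<le> prob (A w) * (K / (L * g ^ l))" for w
  proof (cases "L * g ^ l \<le> real w")
    case True
    then have w1: "1 \<le> w" using Lg by (cases w) auto
    have "prob (F w) \<le> K / real w" using Kb w1 unfolding F_def step_def by blast
    also have "\<dots> \<le> K / (L * g ^ l)" using True K0 Lg by (intro divide_left_mono) auto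
    finally show ?thesis
      unfolding indep_past_generation[OF A_past F_gen] by (intro mult_left_mono) auto
  next
    case False then have "A w = {}" unfolding A_def by auto
    then show ?thesis by simp
  qed
  have "disjoint_family (\<lambda>w. A w \<inter> F w)" "disjoint_family A"
    unfolding disjoint_family_on_def A_def by auto
  then have s1: "(\<lambda>w. prob (A w \<inter> F w)) sums prob (\<Union>w. A w \<inter> F w)"
    and s2: "(\<lambda>w. prob (A w)) sums prob (\<Union>w. A w)"
    using AM FM by (auto intro!: finite_measure_UNION)
  have "prob (\<Union>w. A w \<inter> F w) \<le> prob (\<Union>w. A w) * (K / (L * g ^ l))"
    by (rule sums_le[OF each s1 sums_mult2[OF s2]])
  also have "\<dots> \<le> prob {\<omega>\<in>space M. L \<le> real (Z n \<omega>)} * (K / (L * g ^ l))"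
    using K0 Lg start_meas by (intro mult_right_mono finite_measure_mono) (auto simp: A_def)
  finally show ?thesis unfolding split .
qed

text \<open>From the one-step bound to the whole future: by \<open>first_slow_generation\<close> the event
  that a trajectory starting above \<open>L\<close> ever grows by at most \<open>g\<close> is covered by the events of
  \<open>slow_step_bound\<close>, whose probabilities form a geometric series.\<close>

lemma failure_probability_bound:
  fixes sel :: "nat \<Rightarrow> (nat \<Rightarrow> real) \<Rightarrow> real \<Rightarrow> nat"
  defines "Z \<equiv> sel_proc sel D X R"
  assumes sel: "sel = Nsel \<or> sel = Msel" and g1: "1 < g"
    and Kb: "\<forall>k w. 1 \<le> w \<longrightarrow>
      prob {\<omega>\<in>space M. real (sel (Dsum D k w \<omega>) (\<lambda>j. X k j \<omega>) (Rsum R k w \<omega>)) \<le> g * real w} \<le> K / real w"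
    and L: "0 < L"
  shows "prob ({\<omega>\<in>space M. L \<le> real (Z n \<omega>)} - {\<omega>\<in>space M. \<forall>l. g < ratio (Z (n + l + 1) \<omega>) (Z (n + l) \<omega>)})
    \<le> prob {\<omega>\<in>space M. L \<le> real (Z n \<omega>)} * (K * g / ((g - 1) * L))"
proof -
  define E where "E = {\<omega>\<in>space M. L \<le> real (Z n \<omega>)}"
  define S where "S = (\<lambda>l. {\<omega>\<in>space M. L \<le> real (Z n \<omega>) \<and> L * g ^ l \<le> real (Z (n + l) \<omega>) \<and>
            real (Z (n + l + 1) \<omega>) \<le> g * real (Z (n + l) \<omega>)})"
  have g0: "0 < g" using g1 by simp
  have K0: "0 \<le> K"
  proof -
    have "0 \<le> prob {\<omega>\<in>space M. real (sel (Dsum D 0 1 \<omega>) (\<lambda>j. X 0 j \<omega>) (Rsum R 0 1 \<omega>)) \<le> g * real (1::nat)}"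
      by simp
    also have "\<dots> \<le> K / real (1::nat)" using Kb by blast
    finally show ?thesis by simp
  qed
  have Zm: "(\<lambda>\<omega>. real (Z k \<omega>)) \<in> borel_measurable M" for k
    unfolding Z_def by (rule measurable_real_of_nat[OF sel_proc_meas[OF sel]])
  have mS: "S l \<in> sets M" for l
    unfolding S_def by (intro sets.sets_Collect_conj borel_measurable_le Zm borel_measurable_const
        borel_measurable_times)
  have cover: "E - {\<omega>\<in>space M. \<forall>l. g < ratio (Z (n + l + 1) \<omega>) (Z (n + l) \<omega>)} \<subseteq> (\<Union>l. S l)"
    using first_slow_generation[OF L g0] unfolding E_def S_def by fastforce
  define \<kappa> where "\<kappa> = K * prob E / L"
  have pS: "prob (S l) \<le> \<kappa> * (1 / g) ^ l" for l
    using slow_step_bound[OF sel Kb K0 L g0, of n l] unfolding S_def E_def Z_def \<kappa>_def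
    by (simp add: power_one_over mult.commute)
  have ng: "norm (1 / g) < 1" using g1 by simp
  have sumg: "summable (\<lambda>l. \<kappa> * (1 / g) ^ l)" by (rule summable_mult[OF summable_geometric[OF ng]])
  have sumS: "summable (\<lambda>l. prob (S l))"
    by (rule summable_comparison_test[OF _ sumg]) (use pS in auto)
  have "prob (E - {\<omega>\<in>space M. \<forall>l. g < ratio (Z (n + l + 1) \<omega>) (Z (n + l) \<omega>)}) \<le> prob (\<Union>l. S l)"
    by (rule finite_measure_mono[OF cover]) (use mS in auto)
  also have "\<dots> \<le> (\<Sum>l. prob (S l))"
    by (rule finite_measure_subadditive_countably) (use mS sumS in auto)
  also have "\<dots> \<le> (\<Sum>l. \<kappa> * (1 / g) ^ l)" by (rule suminf_le[OF pS sumS sumg])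
  also have "\<dots> = \<kappa> * (1 / (1 - 1 / g))"
    using sums_unique[OF sums_mult[OF geometric_sums[OF ng], of \<kappa>]] by simp
  also have "\<dots> = prob E * (K * g / ((g - 1) * L))"
    unfolding \<kappa>_def using g1 L by (simp add: field_simps)
  finally show ?thesis unfolding E_def .
qed

lemma conditional_growth_from_step_bound:
  fixes sel :: "nat \<Rightarrow> (nat \<Rightarrow> real) \<Rightarrow> real \<Rightarrow> nat"
  assumes sel: "sel = Nsel \<or> sel = Msel" and g1: "1 < g"
    and Kb: "\<forall>k w. 1 \<le> w \<longrightarrow>
      prob {\<omega>\<in>space M. real (sel (Dsum D k w \<omega>) (\<lambda>j. X k j \<omega>) (Rsum R k w \<omega>)) \<le> g * real w} \<le> K / real w"
    and \<epsilon>: "0 < \<epsilon>" and cg: "c \<le> g" and L: "0 < L" and L_large: "K * g / ((g - 1) * \<epsilon>) \<le> L"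
  shows "conditional_growth M (sel_proc sel D X R) c L \<epsilon>"
  unfolding conditional_growth_def
proof (intro allI impI)
  fix n
  define Z where "Z = sel_proc sel D X R"
  define E where "E = {\<omega>\<in>space M. L \<le> real (Z n \<omega>)}"
  define G where "G = {\<omega>\<in>space M. \<forall>l. c < ratio (Z (n + l + 1) \<omega>) (Z (n + l) \<omega>)}"
  assume "0 < measure M {\<omega>\<in>space M. real (sel_proc sel D X R n \<omega>) \<ge> L}"
  then have PE: "0 < prob E" unfolding E_def Z_def .
  have mE: "E \<in> sets M" unfolding E_def Z_def
    by (intro borel_measurable_le measurable_real_of_nat[OF sel_proc_meas[OF sel]] borel_measurable_const)
  have growth_meas: "{\<omega>\<in>space M. \<forall>l. a < ratio (Z (n + l + 1) \<omega>) (Z (n + l) \<omega>)} \<in> sets M" for a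
    unfolding Z_def by (rule sets.sets_Collect_countable_All)
       (rule borel_measurable_less[OF borel_measurable_const ratio_measurable[OF sel_proc_meas[OF sel]
         sel_proc_meas[OF sel]]])
  have mG: "G \<in> sets M" unfolding G_def by (rule growth_meas)
  have "E - G \<subseteq> E - {\<omega>\<in>space M. \<forall>l. g < ratio (Z (n + l + 1) \<omega>) (Z (n + l) \<omega>)}"
    unfolding G_def using cg by (auto intro: le_less_trans)
  then have "prob (E - G) \<le> prob (E - {\<omega>\<in>space M. \<forall>l. g < ratio (Z (n + l + 1) \<omega>) (Z (n + l) \<omega>)})"
    using mE growth_meas by (intro finite_measure_mono) auto
  also have "\<dots> \<le> prob E * (K * g / ((g - 1) * L))"
    unfolding E_def Z_def by (rule failure_probability_bound[OF sel g1 Kb L])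
  also have "\<dots> \<le> prob E * \<epsilon>"
  proof (rule mult_left_mono)
    have "K * g \<le> L * ((g - 1) * \<epsilon>)" using L_large g1 \<epsilon> by (simp add: pos_divide_le_eq)
    then show "K * g / ((g - 1) * L) \<le> \<epsilon>" using g1 L by (simp add: pos_divide_le_eq mult_ac)
  qed simp
  finally have "prob (E - G) \<le> prob E * \<epsilon>" .
  moreover have "prob (E - G) = prob E - prob (G \<inter> E)"
    using finite_measure_Diff'[OF mE mG] by (simp add: Int_commute)
  ultimately have "(1 - \<epsilon>) * prob E \<le> prob (G \<inter> E)" by (simp add: algebra_simps)
  then show "1 - \<epsilon> \<le> prob ({\<omega>\<in>space M. \<forall>l. c < ratio (sel_proc sel D X R (n + l + 1) \<omega>)
        (sel_proc sel D X R (n + l) \<omega>)} \<inter> {\<omega>\<in>space M. L \<le> real (sel_proc sel D X R n \<omega>)})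
      / prob {\<omega>\<in>space M. L \<le> real (sel_proc sel D X R n \<omega>)}"
    using PE unfolding G_def E_def Z_def by (simp add: pos_le_divide_eq)
qed

end

section \<open>Choice of the size thresholds\<close>

context selection_model
begin

lemma common_bound:
  assumes A: "assumptions_A M D X R"
  shows "\<exists>B. 1 \<le> B \<and> (AE \<omega> in M. real (D 0 1 \<omega>) \<le> B \<and> X 0 1 \<omega> \<le> B \<and> R 0 1 \<omega> \<le> B)"
proof -
  obtain C where C: "\<forall>n k. AE \<omega> in M. real (D n k \<omega>) \<le> C \<and> \<bar>X n k \<omega>\<bar> \<le> C \<and> \<bar>R n k \<omega>\<bar> \<le> C"
    using A unfolding assumptions_A_def by blast
  have "AE \<omega> in M. real (D 0 1 \<omega>) \<le> max C 1 \<and> X 0 1 \<omega> \<le> max C 1 \<and> R 0 1 \<omega> \<le> max C 1"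
    using C[rule_format, of 0 1] by eventually_elim auto
  then show ?thesis by (intro exI[of _ "max C 1"]) auto
qed

lemma cdf_event: "{\<omega>\<in>space M. X 0 1 \<omega> \<le> y} \<in> sets M"
  by (rule borel_measurable_le[OF X_meas borel_measurable_const])
lemma tail_event: "{\<omega>\<in>space M. y < X 0 1 \<omega>} \<in> sets M"
  by (rule borel_measurable_less[OF borel_measurable_const X_meas])

lemma cdf_mono: assumes "x \<le> y" shows "cdfX M X x \<le> cdfX M X y"
  unfolding cdfX_def using assms by (intro finite_measure_mono[OF _ cdf_event]) auto

lemma cdf_neg: assumes "x < 0" shows "cdfX M X x = 0"
proof -
  have e: "{\<omega>\<in>space M. X 0 1 \<omega> \<le> x} = {}"
  proof (rule equals0I)
    fix \<omega> assume "\<omega> \<in> {\<omega>\<in>space M. X 0 1 \<omega> \<le> x}"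
    then have "\<omega> \<in> space M" "X 0 1 \<omega> \<le> x" by auto
    with X_nonneg[of \<omega> 0 1] assms show False by linarith
  qed
  show ?thesis unfolding cdfX_def e by simp
qed

lemma cdf_nonneg: "0 \<le> cdfX M X x" unfolding cdfX_def by simp

lemma cdf_nonpos:
  assumes cont: "\<And>x. isCont (cdfX M X) x" and x: "x \<le> 0"
  shows "cdfX M X x = 0"
proof (cases "x < 0")
  case True then show ?thesis by (rule cdf_neg)
next
  case False then have x0: "x = 0" using x by simp
  have "(cdfX M X \<longlongrightarrow> cdfX M X 0) (at 0)" using cont[of 0] by (simp add: continuous_at)
  then have t1: "(cdfX M X \<longlongrightarrow> cdfX M X 0) (at_left 0)" by (simp add: filterlim_at_split)
  have ev: "eventually (\<lambda>y. cdfX M X y = 0) (at_left (0::real))"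
    unfolding eventually_at_left_field by (intro exI[of _ "-1"]) (auto intro: cdf_neg)
  have t2: "(cdfX M X \<longlongrightarrow> 0) (at_left 0)" using tendsto_eventually[OF ev] by simp
  have "cdfX M X 0 = 0" by (rule tendsto_unique[OF _ t1 t2]) simp
  then show ?thesis using x0 by simp
qed

lemma cdf_bound:
  assumes "AE \<omega> in M. X 0 1 \<omega> \<le> B" shows "cdfX M X B = 1"
  unfolding cdfX_def using prob_Collect_eq_1[OF cdf_event, of B] assms by simp

lemma indicator_expectation:
  assumes S: "{\<omega>\<in>space M. P \<omega>} \<in> sets M"
  shows "integrable M (\<lambda>\<omega>. if P \<omega> then 1 else 0::real)"
    and "expectation (\<lambda>\<omega>. if P \<omega> then 1 else 0::real) = prob {\<omega>\<in>space M. P \<omega>}"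
proof -
  have m: "(\<lambda>\<omega>. if P \<omega> then 1 else 0::real) \<in> borel_measurable M"
    by (rule measurable_If[OF borel_measurable_const borel_measurable_const S])
  show "integrable M (\<lambda>\<omega>. if P \<omega> then 1 else 0::real)"
    by (rule integrable_const_bound[where B=1, OF _ m]) (intro AE_I2, simp)
  have "expectation (\<lambda>\<omega>. if P \<omega> then 1 else 0::real) = expectation (indicator {\<omega>\<in>space M. P \<omega>})"
    by (rule Bochner_Integration.integral_cong) (auto simp: indicator_def)
  also have "\<dots> = prob {\<omega>\<in>space M. P \<omega>}" by (simp add: Int_absorb2)
  finally show "expectation (\<lambda>\<omega>. if P \<omega> then 1 else 0::real) = prob {\<omega>\<in>space M. P \<omega>}" .
qed

lemma partial_integrable:
  assumes S: "{\<omega>\<in>space M. P \<omega>} \<in> sets M" and IX: "integrable M (X 0 1)"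
  shows "integrable M (\<lambda>\<omega>. if P \<omega> then X 0 1 \<omega> else 0)"
proof (rule Bochner_Integration.integrable_bound[OF IX])
  show "(\<lambda>\<omega>. if P \<omega> then X 0 1 \<omega> else 0) \<in> borel_measurable M"
    by (rule measurable_If[OF X_meas borel_measurable_const S])
  show "AE \<omega> in M. norm (if P \<omega> then X 0 1 \<omega> else 0) \<le> norm (X 0 1 \<omega>)" by (intro AE_I2) auto
qed

lemma tau_integral:
  "(\<integral>x. x * indicator {0..\<tau>} x \<partial>lawX M X) = expectation (\<lambda>\<omega>. if X 0 1 \<omega> \<le> \<tau> then X 0 1 \<omega> else 0)"
proof -
  have fm: "(\<lambda>x::real. x * indicator {0..\<tau>} x) \<in> borel_measurable borel" by simp
  have "(\<integral>x. x * indicator {0..\<tau>} x \<partial>lawX M X) = expectation (\<lambda>\<omega>. X 0 1 \<omega> * indicator {0..\<tau>} (X 0 1 \<omega>))"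
    unfolding lawX_def by (rule integral_distr[OF X_meas fm])
  also have "\<dots> = expectation (\<lambda>\<omega>. if X 0 1 \<omega> \<le> \<tau> then X 0 1 \<omega> else 0)"
    by (rule Bochner_Integration.integral_cong) (auto simp: indicator_def X_nonneg)
  finally show ?thesis .
qed

lemma theta_integral:
  "(\<integral>x. x * indicator {\<theta>..b} x \<partial>lawX M X) = expectation (\<lambda>\<omega>. if \<theta> \<le> X 0 1 \<omega> \<and> X 0 1 \<omega> \<le> b then X 0 1 \<omega> else 0)"
proof -
  have fm: "(\<lambda>x::real. x * indicator {\<theta>..b} x) \<in> borel_measurable borel" by simp
  have "(\<integral>x. x * indicator {\<theta>..b} x \<partial>lawX M X) = expectation (\<lambda>\<omega>. X 0 1 \<omega> * indicator {\<theta>..b} (X 0 1 \<omega>))"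
    unfolding lawX_def by (rule integral_distr[OF X_meas fm])
  also have "\<dots> = expectation (\<lambda>\<omega>. if \<theta> \<le> X 0 1 \<omega> \<and> X 0 1 \<omega> \<le> b then X 0 1 \<omega> else 0)"
    by (rule Bochner_Integration.integral_cong) (auto simp: indicator_def)
  finally show ?thesis .
qed

lemma cdf_supp_sup:
  assumes cont: "\<And>x. isCont (cdfX M X) x" and bounded: "AE \<omega> in M. X 0 1 \<omega> \<le> B"
  shows "cdfX M X (supp_sup M X) = 1"
proof -
  define S where "S = {x. cdfX M X x = 1}"
  have "continuous_on UNIV (cdfX M X)" by (intro continuous_at_imp_continuous_on ballI cont)
  then have "closed S" unfolding S_def by (intro closed_Collect_eq) (auto intro: continuous_on_const)
  moreover have "S \<noteq> {}" using cdf_bound[OF bounded] unfolding S_def by auto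
  moreover have "bdd_below S"
  proof (rule bdd_belowI[of _ 0])
    fix x assume "x \<in> S"
    then show "0 \<le> x" using cdf_neg[of x] unfolding S_def by force
  qed
  ultimately have "Inf S \<in> S" by (intro closed_contains_Inf)
  then show ?thesis unfolding S_def supp_sup_def by simp
qed

lemma band_event: "{\<omega>\<in>space M. a < X 0 1 \<omega> \<and> X 0 1 \<omega> \<le> c} \<in> sets M"
proof -
  have "{\<omega>\<in>space M. a < X 0 1 \<omega> \<and> X 0 1 \<omega> \<le> c} = {\<omega>\<in>space M. a < X 0 1 \<omega>} \<inter> {\<omega>\<in>space M. X 0 1 \<omega> \<le> c}"
    by auto
  then show ?thesis using tail_event cdf_event by auto
qed

text \<open>The key monotonicity fact: if \<open>F\<close> is continuous and strictly increases from \<open>a\<close> to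
  \<open>c\<close>, then \<open>X\<close> has positive mass of positive values in \<open>(a, c]\<close>, so its partial mean there
  is positive.  (Pick \<open>w\<^sub>0 \<in> [a, c]\<close> with \<open>F a < F w\<^sub>0 < F c\<close>; then \<open>w\<^sub>0 > 0\<close> and the partial
  mean is at least \<open>w\<^sub>0 (F c - F w\<^sub>0)\<close>.)\<close>

lemma band_mean_pos:
  assumes cont: "\<And>x. isCont (cdfX M X) x" and IX: "integrable M (X 0 1)"
    and incr: "cdfX M X a < cdfX M X c"
  shows "0 < expectation (\<lambda>\<omega>. if a < X 0 1 \<omega> \<and> X 0 1 \<omega> \<le> c then X 0 1 \<omega> else 0)"
proof -
  define F where "F = cdfX M X"
  have ac: "a \<le> c" using incr cdf_mono[of c a] by (cases "a \<le> c") auto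
  have co: "continuous_on S F" for S unfolding F_def by (intro continuous_at_imp_continuous_on ballI cont)
  obtain w0 where w: "a \<le> w0" "w0 \<le> c" "F w0 = (F a + F c) / 2"
    using IVT'[of F a "(F a + F c) / 2" c, OF _ _ ac co] incr unfolding F_def by force
  have w0: "0 < w0"
  proof (rule ccontr)
    assume "\<not> 0 < w0" then have "F w0 = 0" unfolding F_def by (intro cdf_nonpos cont) simp
    then show False using w(3) incr cdf_nonneg[of a] unfolding F_def by simp
  qed
  have ii: "integrable M (\<lambda>\<omega>. if X 0 1 \<omega> \<le> y then 1 else 0::real)" for y
    by (rule indicator_expectation(1)[OF cdf_event])
  have "w0 * (F c - F w0) = expectation (\<lambda>\<omega>. w0 * ((if X 0 1 \<omega> \<le> c then 1 else 0) - (if X 0 1 \<omega> \<le> w0 then 1 else 0)))"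
    unfolding F_def cdfX_def
    by (simp only: Bochner_Integration.integral_mult_right[OF Bochner_Integration.integrable_diff[OF ii ii]]
        Bochner_Integration.integral_diff[OF ii ii] indicator_expectation(2)[OF cdf_event])
  also have "\<dots> \<le> expectation (\<lambda>\<omega>. if a < X 0 1 \<omega> \<and> X 0 1 \<omega> \<le> c then X 0 1 \<omega> else 0)"
  proof (rule Bochner_Integration.integral_mono)
    show "integrable M (\<lambda>\<omega>. w0 * ((if X 0 1 \<omega> \<le> c then 1 else 0) - (if X 0 1 \<omega> \<le> w0 then 1 else 0)))"
      by (intro Bochner_Integration.integrable_mult_right Bochner_Integration.integrable_diff ii)
    show "integrable M (\<lambda>\<omega>. if a < X 0 1 \<omega> \<and> X 0 1 \<omega> \<le> c then X 0 1 \<omega> else 0)"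
      by (rule partial_integrable[OF band_event IX])
    fix \<omega> assume "\<omega> \<in> space M"
    then show "w0 * ((if X 0 1 \<omega> \<le> c then 1 else 0) - (if X 0 1 \<omega> \<le> w0 then 1 else 0))
        \<le> (if a < X 0 1 \<omega> \<and> X 0 1 \<omega> \<le> c then X 0 1 \<omega> else 0)"
      using X_nonneg[of \<omega> 0 1] w w0 by auto
  qed
  moreover have "0 < w0 * (F c - F w0)" using w0 w(3) incr unfolding F_def by simp
  ultimately show ?thesis by linarith
qed

lemma partial_mean_split:
  assumes IX: "integrable M (X 0 1)" and "u \<le> \<tau>"
  shows "expectation (\<lambda>\<omega>. if X 0 1 \<omega> \<le> \<tau> then X 0 1 \<omega> else 0) =
    expectation (\<lambda>\<omega>. if X 0 1 \<omega> \<le> u then X 0 1 \<omega> else 0) +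
    expectation (\<lambda>\<omega>. if u < X 0 1 \<omega> \<and> X 0 1 \<omega> \<le> \<tau> then X 0 1 \<omega> else 0)"
proof -
  have "expectation (\<lambda>\<omega>. if X 0 1 \<omega> \<le> \<tau> then X 0 1 \<omega> else 0) =
      expectation (\<lambda>\<omega>. (if X 0 1 \<omega> \<le> u then X 0 1 \<omega> else 0) +
        (if u < X 0 1 \<omega> \<and> X 0 1 \<omega> \<le> \<tau> then X 0 1 \<omega> else 0))"
    using assms(2) by (intro Bochner_Integration.integral_cong) auto
  then show ?thesis
    using Bochner_Integration.integral_add[OF partial_integrable[OF cdf_event IX]
        partial_integrable[OF band_event IX]] by simp
qed

lemma tail_mean_le:
  assumes IX: "integrable M (X 0 1)" and "\<theta> \<le> v" and bounded: "AE \<omega> in M. X 0 1 \<omega> \<le> b"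
  shows "expectation (\<lambda>\<omega>. if \<theta> < X 0 1 \<omega> \<and> X 0 1 \<omega> \<le> v then X 0 1 \<omega> else 0) +
      expectation (\<lambda>\<omega>. if v < X 0 1 \<omega> then X 0 1 \<omega> else 0)
    \<le> expectation (\<lambda>\<omega>. if \<theta> \<le> X 0 1 \<omega> \<and> X 0 1 \<omega> \<le> b then X 0 1 \<omega> else 0)"
proof -
  have "{\<omega>\<in>space M. \<theta> \<le> X 0 1 \<omega> \<and> X 0 1 \<omega> \<le> b} =
      {\<omega>\<in>space M. \<theta> \<le> X 0 1 \<omega>} \<inter> {\<omega>\<in>space M. X 0 1 \<omega> \<le> b}" by auto
  moreover have "{\<omega>\<in>space M. \<theta> \<le> X 0 1 \<omega>} \<in> sets M"
    by (rule borel_measurable_le[OF borel_measurable_const X_meas])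
  ultimately have "{\<omega>\<in>space M. \<theta> \<le> X 0 1 \<omega> \<and> X 0 1 \<omega> \<le> b} \<in> sets M" using cdf_event by auto
  note ir = partial_integrable[OF this IX]
  note i1 = partial_integrable[OF band_event IX] and i2 = partial_integrable[OF tail_event IX]
  have "AE \<omega> in M. (if \<theta> < X 0 1 \<omega> \<and> X 0 1 \<omega> \<le> v then X 0 1 \<omega> else 0) +
      (if v < X 0 1 \<omega> then X 0 1 \<omega> else 0) \<le> (if \<theta> \<le> X 0 1 \<omega> \<and> X 0 1 \<omega> \<le> b then X 0 1 \<omega> else 0)"
    using bounded AE_space by eventually_elim (use assms(2) X_nonneg in auto)
  from integral_mono_AE[OF Bochner_Integration.integrable_add[OF i1 i2] ir this]
  show ?thesis using Bochner_Integration.integral_add[OF i1 i2] by simp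
qed

lemma tail_expectation:
  "expectation (\<lambda>\<omega>. if v < X 0 1 \<omega> then 1 else 0::real) = 1 - cdfX M X v"
proof -
  have "expectation (\<lambda>\<omega>. if v < X 0 1 \<omega> then 1 else 0::real) = prob {\<omega>\<in>space M. v < X 0 1 \<omega>}"
    by (rule indicator_expectation(2)[OF tail_event])
  also have "{\<omega>\<in>space M. v < X 0 1 \<omega>} = space M - {\<omega>\<in>space M. X 0 1 \<omega> \<le> v}" by auto
  also have "prob (space M - {\<omega>\<in>space M. X 0 1 \<omega> \<le> v}) = 1 - cdfX M X v"
    unfolding cdfX_def by (rule prob_compl[OF cdf_event])
  finally show ?thesis .
qed

text \<open>If \<open>r \<le> m\<mu>\<close> take \<open>u < \<tau>\<close> with \<open>F u\<close> close to \<open>F \<tau>\<close>; otherwise any upper bound of \<open>X\<close>.\<close>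

lemma wf_threshold:
  assumes A: "assumptions_A M D X R"
    and tau: "rR M R \<le> mD M D * muX M X \<Longrightarrow> (\<integral>x. x * indicator {0..\<tau>} x \<partial>lawX M X) = rR M R / mD M D"
    and g0: "0 < g" and gl: "g < mD M D * (if rR M R \<le> mD M D * muX M X then cdfX M X \<tau> else 1)"
  shows "\<exists>u. g < mD M D * expectation (\<lambda>\<omega>. if X 0 1 \<omega> \<le> u then 1 else 0) \<and>
    mD M D * expectation (\<lambda>\<omega>. if X 0 1 \<omega> \<le> u then X 0 1 \<omega> else 0) < rR M R"
proof -
  define m where "m = mD M D"
  define r where "r = rR M R"
  define F where "F = cdfX M X"
  have cont: "\<And>x. isCont F x" and IX: "integrable M (X 0 1)" and m1: "1 < m"
    using A unfolding assumptions_A_def F_def m_def by blast+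
  have m0: "0 < m" using m1 by simp
  have q_eq: "expectation (\<lambda>\<omega>. if X 0 1 \<omega> \<le> u then 1 else 0::real) = F u" for u
    unfolding F_def cdfX_def by (rule indicator_expectation(2)[OF cdf_event])
  have ie: "integrable M (\<lambda>\<omega>. if X 0 1 \<omega> \<le> u then X 0 1 \<omega> else 0)" for u
    by (rule partial_integrable[OF cdf_event IX])
  show ?thesis
  proof (cases "r \<le> m * muX M X")
    case True
    have gm: "g / m < F \<tau>" using gl True m0 unfolding m_def r_def F_def
      by (simp add: pos_divide_less_eq mult.commute)
    define l where "l = (g / m + F \<tau>) / 2"
    have "0 < g / m" "2 * l = g / m + F \<tau>" using g0 m0 unfolding l_def by simp_all
    then have l: "g / m < l" "l < F \<tau>" "0 < l" using gm by linarith+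
    have "0 \<le> \<tau>" using cdf_neg[of \<tau>] l unfolding F_def by force
    moreover have "F (-1) = 0" unfolding F_def by (rule cdf_neg) simp
    moreover have "continuous_on {-1..\<tau>} F" by (intro continuous_at_imp_continuous_on ballI cont)
    ultimately obtain u where u: "u \<le> \<tau>" "F u = l"
      using IVT'[of F "-1" l \<tau>] l by force
    have "0 < expectation (\<lambda>\<omega>. if u < X 0 1 \<omega> \<and> X 0 1 \<omega> \<le> \<tau> then X 0 1 \<omega> else 0)"
      using band_mean_pos[OF cont[unfolded F_def] IX] u l unfolding F_def by simp
    moreover note partial_mean_split[OF IX u(1)]
    moreover have "expectation (\<lambda>\<omega>. if X 0 1 \<omega> \<le> \<tau> then X 0 1 \<omega> else 0) = r / m"
      using tau True tau_integral unfolding r_def m_def by simp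
    ultimately have "expectation (\<lambda>\<omega>. if X 0 1 \<omega> \<le> u then X 0 1 \<omega> else 0) < r / m" by linarith
    then have "m * expectation (\<lambda>\<omega>. if X 0 1 \<omega> \<le> u then X 0 1 \<omega> else 0) < r"
      using m0 by (simp add: pos_less_divide_eq mult.commute)
    moreover have "g < m * F u" using u l m0 by (simp add: pos_divide_less_eq mult.commute)
    ultimately show ?thesis unfolding m_def r_def q_eq F_def by blast
  next
    case False
    obtain B where "AE \<omega> in M. real (D 0 1 \<omega>) \<le> B \<and> X 0 1 \<omega> \<le> B \<and> R 0 1 \<omega> \<le> B"
      using common_bound[OF A] by blast
    then have FB: "F B = 1" unfolding F_def by (intro cdf_bound) (auto elim: AE_mp)
    have "expectation (\<lambda>\<omega>. if X 0 1 \<omega> \<le> B then X 0 1 \<omega> else 0) \<le> expectation (X 0 1)"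
      by (rule Bochner_Integration.integral_mono[OF ie IX]) (auto simp: X_nonneg)
    then have "m * expectation (\<lambda>\<omega>. if X 0 1 \<omega> \<le> B then X 0 1 \<omega> else 0) \<le> m * muX M X"
      using m0 unfolding muX_def by simp
    then have "m * expectation (\<lambda>\<omega>. if X 0 1 \<omega> \<le> B then X 0 1 \<omega> else 0) < r"
      using False by linarith
    moreover have "g < m * F B" using FB gl False unfolding m_def r_def by simp
    ultimately show ?thesis unfolding m_def r_def q_eq F_def by blast
  qed
qed

text \<open>If \<open>r \<le> m\<mu>\<close> take \<open>v > \<theta>\<close> with \<open>F v\<close> close to
  \<open>F \<theta>\<close>; otherwise \<open>v = -1\<close>.\<close>

lemma sf_threshold:
  assumes A: "assumptions_A M D X R"
    and theta: "rR M R \<le> mD M D * muX M X \<Longrightarrow>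
      (\<integral>x. x * indicator {\<theta>..supp_sup M X} x \<partial>lawX M X) = rR M R / mD M D"
    and g0: "0 < g" and gl: "g < mD M D * (if rR M R \<le> mD M D * muX M X then 1 - cdfX M X \<theta> else 1)"
  shows "\<exists>v. g < mD M D * expectation (\<lambda>\<omega>. if v < X 0 1 \<omega> then 1 else 0) \<and>
    mD M D * expectation (\<lambda>\<omega>. if v < X 0 1 \<omega> then X 0 1 \<omega> else 0) < rR M R"
proof -
  define m where "m = mD M D"
  define r where "r = rR M R"
  define F where "F = cdfX M X"
  have cont: "\<And>x. isCont F x" and IX: "integrable M (X 0 1)" and m1: "1 < m"
    using A unfolding assumptions_A_def F_def m_def by blast+
  have m0: "0 < m" using m1 by simp
  have q_eq: "expectation (\<lambda>\<omega>. if v < X 0 1 \<omega> then 1 else 0::real) = 1 - F v" for v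
    unfolding F_def by (rule tail_expectation)
  have ie: "integrable M (\<lambda>\<omega>. if v < X 0 1 \<omega> then X 0 1 \<omega> else 0)" for v
    by (rule partial_integrable[OF tail_event IX])
  show ?thesis
  proof (cases "r \<le> m * muX M X")
    case True
    define b where "b = supp_sup M X"
    obtain B where "AE \<omega> in M. real (D 0 1 \<omega>) \<le> B \<and> X 0 1 \<omega> \<le> B \<and> R 0 1 \<omega> \<le> B"
      using common_bound[OF A] by blast
    then have aeB: "AE \<omega> in M. X 0 1 \<omega> \<le> B" by (auto elim: AE_mp)
    have FB: "F B = 1" unfolding F_def by (rule cdf_bound[OF aeB])
    have "F b = 1" unfolding F_def b_def by (rule cdf_supp_sup[OF cont[unfolded F_def] aeB])
    then have aeb: "AE \<omega> in M. X 0 1 \<omega> \<le> b"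
      using prob_Collect_eq_1[OF cdf_event, of b] unfolding F_def cdfX_def by simp
    have gm: "g / m < 1 - F \<theta>" using gl True m0 unfolding m_def r_def F_def
      by (simp add: pos_divide_less_eq mult.commute)
    define l where "l = (F \<theta> + (1 - g / m)) / 2"
    have "0 < g / m" "2 * l = F \<theta> + (1 - g / m)" using g0 m0 unfolding l_def by simp_all
    then have l: "F \<theta> < l" "l < 1 - g / m" "l \<le> F B" using gm FB by linarith+
    have "\<theta> \<le> B" using cdf_mono[of B \<theta>] l FB unfolding F_def by force
    moreover have "continuous_on {\<theta>..B} F" by (intro continuous_at_imp_continuous_on ballI cont)
    ultimately obtain v where v: "\<theta> \<le> v" "F v = l"
      using IVT'[of F \<theta> l B] l by force
    have "0 < expectation (\<lambda>\<omega>. if \<theta> < X 0 1 \<omega> \<and> X 0 1 \<omega> \<le> v then X 0 1 \<omega> else 0)"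
      using band_mean_pos[OF cont[unfolded F_def] IX] v l unfolding F_def by simp
    moreover note tail_mean_le[OF IX v(1) aeb]
    moreover have "expectation (\<lambda>\<omega>. if \<theta> \<le> X 0 1 \<omega> \<and> X 0 1 \<omega> \<le> b then X 0 1 \<omega> else 0) = r / m"
      using theta True theta_integral unfolding r_def m_def b_def by simp
    ultimately have "expectation (\<lambda>\<omega>. if v < X 0 1 \<omega> then X 0 1 \<omega> else 0) < r / m" by linarith
    then have "m * expectation (\<lambda>\<omega>. if v < X 0 1 \<omega> then X 0 1 \<omega> else 0) < r"
      using m0 by (simp add: pos_less_divide_eq mult.commute)
    moreover have "g / m < 1 - F v" using v l by linarith
    then have "g < m * (1 - F v)" using m0 by (simp add: pos_divide_less_eq mult.commute)
    ultimately show ?thesis unfolding m_def r_def q_eq F_def by blast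
  next
    case False
    have "expectation (\<lambda>\<omega>. if -1 < X 0 1 \<omega> then X 0 1 \<omega> else 0) = expectation (X 0 1)"
      by (rule Bochner_Integration.integral_cong) (auto dest: X_nonneg[of _ 0 1])
    then have "m * expectation (\<lambda>\<omega>. if -1 < X 0 1 \<omega> then X 0 1 \<omega> else 0) < r"
      using False unfolding muX_def by simp
    moreover have "g < m * (1 - F (-1))"
      using cdf_neg[of "-1"] gl False unfolding m_def r_def F_def by simp
    ultimately show ?thesis unfolding m_def r_def q_eq F_def by blast
  qed
qed

end

context selection_model
begin

lemma growth_eventually:
  fixes Q :: "real \<Rightarrow> real \<Rightarrow> bool" and sel :: "nat \<Rightarrow> (nat \<Rightarrow> real) \<Rightarrow> real \<Rightarrow> nat"
  assumes sel: "sel = Nsel \<or> sel = Msel"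
    and lbsel: "\<And>u t x s. (\<forall>j\<in>{1..t}. 0 \<le> x j) \<Longrightarrow> (\<Sum>j\<in>{j\<in>{1..t}. Q u (x j)}. x j) \<le> s \<Longrightarrow>
        card {j\<in>{1..t}. Q u (x j)} \<le> sel t x s"
    and Qm: "\<And>u. {x. Q u x} \<in> sets borel"
    and A: "assumptions_A M D X R"
    and c1: "1 < mD M D * c" and \<delta>: "0 < \<delta>" and \<epsilon>: "0 < \<epsilon>"
    and threshold: "\<And>g. 0 < g \<Longrightarrow> g < mD M D * c \<Longrightarrow> \<exists>u.
        g < mD M D * expectation (\<lambda>\<omega>. if Q u (X 0 1 \<omega>) then 1 else 0) \<and>
        mD M D * expectation (\<lambda>\<omega>. if Q u (X 0 1 \<omega>) then X 0 1 \<omega> else 0) < rR M R"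
  shows "\<exists>L0. \<forall>L\<ge>L0. 0 < L \<and> conditional_growth M (sel_proc sel D X R) (mD M D * c - \<delta>) L \<epsilon>"
proof -
  define z where "z = min \<delta> ((mD M D * c - 1) / 2)"
  define g where "g = mD M D * c - z"
  have "0 < z" "z \<le> \<delta>" "2 * z \<le> mD M D * c - 1" using c1 \<delta> unfolding z_def by (auto simp: min_def)
  then have g1: "1 < g" and gc: "g < mD M D * c" and cg: "mD M D * c - \<delta> \<le> g"
    unfolding g_def by linarith+
  obtain u where u1: "g < mD M D * expectation (\<lambda>\<omega>. if Q u (X 0 1 \<omega>) then 1 else 0)"
    and u2: "mD M D * expectation (\<lambda>\<omega>. if Q u (X 0 1 \<omega>) then X 0 1 \<omega> else 0) < rR M R"
    using threshold[of g] g1 gc by auto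
  obtain B where B1: "1 \<le> B" and Bae: "AE \<omega> in M. real (D 0 1 \<omega>) \<le> B \<and> X 0 1 \<omega> \<le> B \<and> R 0 1 \<omega> \<le> B"
    using common_bound[OF A] by blast
  have m1: "1 < mD M D" using A unfolding assumptions_A_def by blast
  obtain K where Kb: "\<forall>k w. 1 \<le> w \<longrightarrow>
      prob {\<omega>\<in>space M. real (sel (Dsum D k w \<omega>) (\<lambda>j. X k j \<omega>) (Rsum R k w \<omega>)) \<le> g * real w} \<le> K / real w"
    using step_bound[where Q="Q u" and sel=sel, OF lbsel Qm B1 Bae m1 _ u1 u2] g1 by auto
  show ?thesis
  proof (intro exI allI impI conjI)
    fix L assume L: "max 1 (K * g / ((g - 1) * \<epsilon>)) \<le> L"
    then show "0 < L" by linarith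
    show "conditional_growth M (sel_proc sel D X R) (mD M D * c - \<delta>) L \<epsilon>"
      using L by (intro conditional_growth_from_step_bound[OF sel g1 Kb \<epsilon> cg]) auto
  qed
qed

text \<open>The hypothesis \<open>1 < m c\<close> is carried along so that
  both statements hold for the same \<open>L\<close> irrespective of it.\<close>

lemma wf_growth_eventually:
  assumes A: "assumptions_A M D X R"
    and tau: "rR M R \<le> mD M D * muX M X \<Longrightarrow> (\<integral>x. x * indicator {0..\<tau>} x \<partial>lawX M X) = rR M R / mD M D"
    and \<epsilon>: "0 < \<epsilon>" and \<delta>: "0 < \<delta>"
  defines "c \<equiv> if rR M R \<le> mD M D * muX M X then cdfX M X \<tau> else 1"
  shows "\<exists>L0. \<forall>L\<ge>L0. 0 < L \<and> (1 < mD M D * c \<longrightarrow> conditional_growth M (wf_proc D X R) (mD M D * c - \<delta>) L \<epsilon>)"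
proof (cases "1 < mD M D * c")
  case True
  have "{x::real. x \<le> u} \<in> sets borel" for u by (metis atMost_borel atMost_def)
  then show ?thesis
    using growth_eventually[where sel=Nsel and Q="\<lambda>u x. x \<le> u", OF _ Nsel_lb _ A True \<delta> \<epsilon>]
      wf_threshold[OF A tau] unfolding wf_proc_eq c_def by auto
qed (auto intro: exI[of _ 1])

lemma sf_growth_eventually:
  assumes A: "assumptions_A M D X R"
    and theta: "rR M R \<le> mD M D * muX M X \<Longrightarrow>
      (\<integral>x. x * indicator {\<theta>..supp_sup M X} x \<partial>lawX M X) = rR M R / mD M D"
    and \<epsilon>: "0 < \<epsilon>" and \<delta>: "0 < \<delta>"
  defines "c \<equiv> if rR M R \<le> mD M D * muX M X then 1 - cdfX M X \<theta> else 1"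
  shows "\<exists>L0. \<forall>L\<ge>L0. 0 < L \<and> (1 < mD M D * c \<longrightarrow> conditional_growth M (sf_proc D X R) (mD M D * c - \<delta>) L \<epsilon>)"
proof (cases "1 < mD M D * c")
  case True
  have "{x::real. v < x} \<in> sets borel" for v by (metis greaterThan_borel greaterThan_def)
  then show ?thesis
    using growth_eventually[where sel=Msel and Q="\<lambda>v x. v < x", OF _ Msel_lb _ A True \<delta> \<epsilon>]
      sf_threshold[OF A theta] unfolding sf_proc_eq c_def by auto
qed (auto intro: exI[of _ 1])

lemma growth_both_processes:
  assumes A: "assumptions_A M D X R"
    and tau: "rR M R \<le> mD M D * muX M X \<Longrightarrow> (\<integral>x. x * indicator {0..\<tau>} x \<partial>lawX M X) = rR M R / mD M D"
    and theta: "rR M R \<le> mD M D * muX M X \<Longrightarrow>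
      (\<integral>x. x * indicator {\<theta>..supp_sup M X} x \<partial>lawX M X) = rR M R / mD M D"
    and \<epsilon>: "0 < \<epsilon>" and \<delta>: "0 < \<delta>"
  defines "cw \<equiv> if rR M R \<le> mD M D * muX M X then cdfX M X \<tau> else 1"
    and "cs \<equiv> if rR M R \<le> mD M D * muX M X then 1 - cdfX M X \<theta> else 1"
  shows "\<exists>L>0. (1 < mD M D * cw \<longrightarrow> conditional_growth M (wf_proc D X R) (mD M D * cw - \<delta>) L \<epsilon>) \<and>
                (1 < mD M D * cs \<longrightarrow> conditional_growth M (sf_proc D X R) (mD M D * cs - \<delta>) L \<epsilon>)"
proof -
  obtain Lw where "\<forall>L\<ge>Lw. 0 < L \<and> (1 < mD M D * cw \<longrightarrow> conditional_growth M (wf_proc D X R) (mD M D * cw - \<delta>) L \<epsilon>)"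
    using wf_growth_eventually[OF A tau \<epsilon> \<delta>] unfolding cw_def by blast
  moreover obtain Ls where "\<forall>L\<ge>Ls. 0 < L \<and> (1 < mD M D * cs \<longrightarrow> conditional_growth M (sf_proc D X R) (mD M D * cs - \<delta>) L \<epsilon>)"
    using sf_growth_eventually[OF A theta \<epsilon> \<delta>] unfolding cs_def by blast
  ultimately show ?thesis by (intro exI[of _ "max Lw Ls"]) auto
qed

end

theorem mainTheorem16:
  fixes M :: "'a measure"
    and D :: "nat \<Rightarrow> nat \<Rightarrow> 'a \<Rightarrow> nat"
    and X R :: "nat \<Rightarrow> nat \<Rightarrow> 'a \<Rightarrow> real"
    and \<tau> \<theta> :: real
  assumes H_std: "standing_setup M D X R"
    and A: "assumptions_A M D X R"
    and tau: "rR M R \<le> mD M D * muX M X \<Longrightarrow>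
       (\<integral>x. x * indicator {0..\<tau>} x \<partial>lawX M X) = rR M R / mD M D"
    and theta: "rR M R \<le> mD M D * muX M X \<Longrightarrow>
       (\<integral>x. x * indicator {\<theta>..supp_sup M X} x \<partial>lawX M X) = rR M R / mD M D"
  shows "\<forall>\<epsilon>>0. \<forall>\<delta>>0. \<exists>L>0.
    (reaches_all M (wf_proc D X R) \<and>
     mD M D * (if rR M R \<le> mD M D * muX M X then cdfX M X \<tau> else 1) > 1 \<longrightarrow>
       (\<forall>n. measure M {\<omega> \<in> space M. real (wf_proc D X R n \<omega>) \<ge> L} > 0 \<longrightarrow>
          measure M ({\<omega> \<in> space M. \<forall>l. ratio (wf_proc D X R (n + l + 1) \<omega>) (wf_proc D X R (n + l) \<omega>)
                 > mD M D * (if rR M R \<le> mD M D * muX M X then cdfX M X \<tau> else 1) - \<delta>}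
               \<inter> {\<omega> \<in> space M. real (wf_proc D X R n \<omega>) \<ge> L})
          / measure M {\<omega> \<in> space M. real (wf_proc D X R n \<omega>) \<ge> L} \<ge> 1 - \<epsilon>)) \<and>
    (reaches_all M (sf_proc D X R) \<and>
     mD M D * (if rR M R \<le> mD M D * muX M X then 1 - cdfX M X \<theta> else 1) > 1 \<longrightarrow>
       (\<forall>n. measure M {\<omega> \<in> space M. real (sf_proc D X R n \<omega>) \<ge> L} > 0 \<longrightarrow>
          measure M ({\<omega> \<in> space M. \<forall>l. ratio (sf_proc D X R (n + l + 1) \<omega>) (sf_proc D X R (n + l) \<omega>)
                 > mD M D * (if rR M R \<le> mD M D * muX M X then 1 - cdfX M X \<theta> else 1) - \<delta>}
               \<inter> {\<omega> \<in> space M. real (sf_proc D X R n \<omega>) \<ge> L})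
          / measure M {\<omega> \<in> space M. real (sf_proc D X R n \<omega>) \<ge> L} \<ge> 1 - \<epsilon>))"
proof -
  interpret selection_model M D X R by (rule selection_model.intro[OF H_std])
  show ?thesis
    using growth_both_processes[OF A tau theta] unfolding conditional_growth_def by blast
qed

end
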